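(* Let $p$ be an odd prime, $\omega=e^{2\pi i/p}$, $m\ge1$, $Q=T_{(p^m)}$ and $K=K_Q(p)$, and let $\phi=\phi_1$ be the map on $K$ defined below. Let $M=S_\xi X^b$ and $M'=S_{\xi'}X^{b'}$ be elements of $K$ with $b,b'\neq0$ and $[M,M']=\omega^c\mathbbm{1}$ for some $c\in\mathbb{Z}_p$. Then $\phi(MM')=\phi(M)\phi(M')$.
   Context: Let $\{|q\rangle:q\in\mathbb{Z}_p\}$ be the computational basis of $\mathbb{C}^p$, $X|q\rangle=|q+1\rangle$. For $\xi:\mathbb{Z}_p\to U(1)$ let $S_\xi=\mathrm{diag}(\xi(0),\dots,\xi(p-1))$. $T=\{S_\xi:\prod_{q}\xi(q)=1\}$, $T_{(p^k)}=\{S\in T:S^{p^k}=\mathbbm{1}\}$. $K_Q(p)$ is the subgroup of $SU(p)$ generated by all $S_\xi X^b$, $S_\xi\in Q$, $b\in\mathbb{Z}_p$; each element is uniquely $S_\xi X^b$. The commutator is $[A,B]=ABA^{-1}B^{-1}$. Every $S_\xi\in T_{(p^m)}$ has a unique expansion $\xi(q)=\exp\big(\sum_{j=1}^m\frac{2\pi i}{p^j}\sum_{a=0}^{p-1}\vartheta_{j,a}q^a\big)$ with $\vartheta_{j,a}\in\{0,\dots,p-1\}$ (set $\vartheta_{2,0}=0$ if $m=1$). Define $R(\xi)(q)=\omega^{\vartheta_{1,0}+\vartheta_{1,1}q}e^{2\pi i\vartheta_{2,0}/p^2}$ and $P(\xi)(q)=\omega^{\vartheta_{1,0}+\vartheta_{1,1}q}$.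 Define $\phi_1:K\to U(p)$ by $\phi_1(S_\xi)=S_{R(\xi)}$, $\phi_1(S_\xi X)=S_{P(\xi)}X$, and for $2\le b\le p-1$, $\phi_1(M)=\phi_1(M^{y})^{b}$ where $M=S_\xi X^b$ and $y\in\{1,\dots,p-1\}$ with $yb\equiv1\bmod p$. *)

theory Defs
  imports "Jordan_Normal_Form.Matrix" "HOL-Number_Theory.Cong"
begin

text \<open>Matrices in U(p) are p x p complex matrices, rows/columns indexed by 0..p-1 (= Z_p).\<close>

definition omega :: "nat \<Rightarrow> complex" where
  "omega p = exp (2 * of_real pi * \<i> / of_nat p)"

text \<open>Shift X with X|q> = |q+1 mod p>: entry (row i, column j) is 1 iff i = j+1 mod p.\<close>
definition Xmat :: "nat \<Rightarrow> complex mat" where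
  "Xmat p = mat p p (\<lambda>(i,j). if i = (j + 1) mod p then 1 else 0)"

definition Smat :: "nat \<Rightarrow> (nat \<Rightarrow> complex) \<Rightarrow> complex mat" where
  "Smat p \<xi> = mat_diag p \<xi>"

text \<open>Functions xi : Z_p -> U(1) with S_xi in T_(p^m) (xi normalised to 1 outside {0..<p}).\<close>
definition Qset :: "nat \<Rightarrow> nat \<Rightarrow> (nat \<Rightarrow> complex) set" where
  "Qset p m = {\<xi>. (\<forall>q<p. norm (\<xi> q) = 1) \<and> (\<Prod>q<p. \<xi> q) = 1
                 \<and> Smat p \<xi> ^\<^sub>m (p ^ m) = 1\<^sub>m p \<and> (\<forall>q\<ge>p. \<xi> q = 1)}"

definition Kset :: "nat \<Rightarrow> nat \<Rightarrow> complex mat set" where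
  "Kset p m = {Smat p \<xi> * (Xmat p ^\<^sub>m b) | \<xi> b. \<xi> \<in> Qset p m \<and> b < p}"

definition dec_xi :: "nat \<Rightarrow> nat \<Rightarrow> complex mat \<Rightarrow> (nat \<Rightarrow> complex)" where
  "dec_xi p m M = (THE \<xi>. \<xi> \<in> Qset p m \<and> (\<exists>b<p. M = Smat p \<xi> * (Xmat p ^\<^sub>m b)))"

definition dec_b :: "nat \<Rightarrow> nat \<Rightarrow> complex mat \<Rightarrow> nat" where
  "dec_b p m M = (THE b. b < p \<and> (\<exists>\<xi>\<in>Qset p m. M = Smat p \<xi> * (Xmat p ^\<^sub>m b)))"

text \<open>The coefficients vartheta_{j,a} (j in 1..m, a in 0..p-1) of the unique expansion;
  set to 0 outside this range (so vartheta_{2,0} = 0 when m = 1).\<close>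
definition theta :: "nat \<Rightarrow> nat \<Rightarrow> (nat \<Rightarrow> complex) \<Rightarrow> nat \<Rightarrow> nat \<Rightarrow> nat" where
  "theta p m \<xi> = (THE \<theta>. (\<forall>j a. \<theta> j a < p) \<and>
      (\<forall>j a. (j < 1 \<or> j > m \<or> a \<ge> p) \<longrightarrow> \<theta> j a = 0) \<and>
      (\<forall>q<p. \<xi> q = exp (\<Sum>j\<in>{1..m}. 2 * of_real pi * \<i> / of_nat (p ^ j)
                                    * of_nat (\<Sum>a<p. \<theta> j a * q ^ a))))"

definition Rfun :: "nat \<Rightarrow> nat \<Rightarrow> (nat \<Rightarrow> complex) \<Rightarrow> nat \<Rightarrow> complex" where
  "Rfun p m \<xi> q = (if q < p then
      omega p ^ (theta p m \<xi> 1 0 + theta p m \<xi> 1 1 * q)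
        * exp (2 * of_real pi * \<i> * of_nat (theta p m \<xi> 2 0) / of_nat (p ^ 2))
     else 1)"

definition Pfun :: "nat \<Rightarrow> nat \<Rightarrow> (nat \<Rightarrow> complex) \<Rightarrow> nat \<Rightarrow> complex" where
  "Pfun p m \<xi> q = (if q < p then omega p ^ (theta p m \<xi> 1 0 + theta p m \<xi> 1 1 * q) else 1)"

text \<open>phi_1 on S_xi X^b for b in {0,1}.\<close>
definition phi_base :: "nat \<Rightarrow> nat \<Rightarrow> complex mat \<Rightarrow> complex mat" where
  "phi_base p m M = (if dec_b p m M = 0 then Smat p (Rfun p m (dec_xi p m M))
                     else Smat p (Pfun p m (dec_xi p m M)) * Xmat p)"

definition phi1 :: "nat \<Rightarrow> nat \<Rightarrow> complex mat \<Rightarrow> complex mat" where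
  "phi1 p m M = (let b = dec_b p m M in
     if b \<le> 1 then phi_base p m M
     else (let y = (THE y. y \<in> {1..p-1} \<and> [y * b = 1] (mod p))
           in phi_base p m (M ^\<^sub>m y) ^\<^sub>m b))"

definition minv :: "complex mat \<Rightarrow> complex mat" where
  "minv A = (THE B. inverts_mat A B \<and> inverts_mat B A)"

definition commutator :: "complex mat \<Rightarrow> complex mat \<Rightarrow> complex mat" where
  "commutator A B = A * B * minv A * minv B"

end

theory Submission
  imports Defs "HOL-Number_Theory.Number_Theory" "HOL-Computational_Algebra.Polynomial"
begin

text \<open>An element \<open>M = S\<^sub>\<xi> X\<^sup>b\<close> of \<open>K\<close> with \<open>b \<noteq> 0\<close> has order \<open>p\<close>, so for \<open>y b \<equiv> 1 (mod p)\<close> the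
  element \<open>N = M\<^sup>y = S\<^sub>g X\<close> satisfies \<open>M = N\<^sup>b\<close>. Write \<open>M' = Z N\<^sup>b\<^sup>'\<close> with \<open>Z\<close> diagonal. The
  commutator condition \<open>M M' = \<omega>\<^sup>c M' M\<close> says that conjugation by \<open>M\<close> shifts the diagonal of \<open>Z\<close>
  by \<open>b\<close> and multiplies it by \<open>\<omega>\<^sup>c\<close>, so \<open>Z = D\<^sub>k\<^sub>,\<^sub>l\<close> is the diagonal matrix of a linear character
  \<open>q \<mapsto> \<omega>\<^sup>k\<^sup>+\<^sup>l\<^sup>q\<close>. The matrices \<open>D\<^sub>k\<^sub>,\<^sub>l N\<^sup>j\<close> form a Heisenberg group containing \<open>M\<close> and \<open>M'\<close>,
  and \<open>\<phi>\<^sub>1\<close> maps \<open>D\<^sub>k\<^sub>,\<^sub>l N\<^sup>j\<close> to \<open>D\<^sub>k\<^sub>,\<^sub>l (S\<^sub>P\<^sub>(\<^sub>g\<^sub>) X)\<^sup>j\<close>: twisting a diagonal by a linear character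
  only shifts \<open>\<vartheta>\<^sub>1\<^sub>,\<^sub>0\<close> and \<open>\<vartheta>\<^sub>1\<^sub>,\<^sub>1\<close>, and \<open>R\<close> of a linear character is the character itself.
  Since the group law does not depend on \<open>g\<close>, this map is multiplicative.\<close>

section \<open>Roots of unity\<close>

definition unity_root :: "nat \<Rightarrow> nat \<Rightarrow> complex" where
  "unity_root N j = exp (2 * of_real pi * \<i> * of_nat j / of_nat N)"

lemma unity_root_0 [simp]: "unity_root N 0 = 1"
  by (simp add: unity_root_def)

lemma unity_root_add: "unity_root N (a + b) = unity_root N a * unity_root N b"
  unfolding unity_root_def by (simp add: add_divide_distrib distrib_left exp_add[symmetric])

lemma unity_root_mult: "unity_root N (a * b) = unity_root N a ^ b"
proof -
  have "2 * of_real pi * \<i> * of_nat (a * b) / of_nat N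
        = of_nat b * (2 * of_real pi * \<i> * of_nat a / of_nat N)"
    by (simp add: mult_ac)
  then show ?thesis
    unfolding unity_root_def by (simp only: exp_of_nat_mult)
qed

lemma unity_root_sum: "finite A \<Longrightarrow> unity_root N (\<Sum>j\<in>A. f j) = (\<Prod>j\<in>A. unity_root N (f j))"
  by (induction A rule: finite_induct) (simp_all add: unity_root_add)

lemma unity_root_scale: "d > 0 \<Longrightarrow> unity_root (d * N) (d * j) = unity_root N j"
  unfolding unity_root_def by (simp add: mult.assoc)

lemma unity_root_eq_cis: "N > 0 \<Longrightarrow> unity_root N k = cis (2 * pi * real k / real N)"
  unfolding unity_root_def cis_conv_exp by (simp add: algebra_simps)

lemma unity_root_dvd_eq_1:
  assumes "N dvd a" shows "unity_root N a = 1"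
proof (cases "N = 0")
  case False
  obtain t where "a = N * t" using assms by blast
  moreover have "unity_root N N = 1" using False by (simp add: unity_root_def)
  ultimately show ?thesis by (simp add: unity_root_mult)
qed (use assms in simp)

lemma unity_root_mod: "unity_root N j = unity_root N (j mod N)"
proof -
  have "unity_root N j = unity_root N (N * (j div N)) * unity_root N (j mod N)"
    by (simp flip: unity_root_add)
  then show ?thesis by (simp add: unity_root_dvd_eq_1)
qed

lemma unity_root_eq_iff:
  assumes "N > 0" shows "unity_root N a = unity_root N b \<longleftrightarrow> [a = b] (mod N)"
proof -
  have "inj_on (\<lambda>k. cis (2 * pi * real k / real N)) {..<N}"
    using bij_betw_roots_unity[OF assms] by (rule bij_betw_imp_inj_on)
  then have "unity_root N (a mod N) = unity_root N (b mod N) \<longleftrightarrow> a mod N = b mod N"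
    using assms by (auto simp: unity_root_eq_cis inj_on_def)
  then show ?thesis
    unfolding cong_def by (metis unity_root_mod)
qed

lemma unity_root_cong: "N > 0 \<Longrightarrow> [a = b] (mod N) \<Longrightarrow> unity_root N a = unity_root N b"
  by (simp add: unity_root_eq_iff)

lemma root_of_unity_eq_unity_root:
  assumes "N > 0" "z ^ N = 1" shows "\<exists>j. z = unity_root N j"
proof -
  have "z \<in> (\<lambda>k. cis (2 * pi * real k / real N)) ` {..<N}"
    using bij_betw_roots_unity[OF assms(1)] assms(2) unfolding bij_betw_def by auto
  then show ?thesis using unity_root_eq_cis[OF assms(1)] by auto
qed

lemma unity_root_power_eq_1: "N dvd M \<Longrightarrow> unity_root N j ^ M = 1"
  by (simp add: unity_root_dvd_eq_1 flip: unity_root_mult)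

lemma omega_power: "omega p ^ k = unity_root p k"
  unfolding omega_def unity_root_def by (simp add: exp_of_nat_mult[symmetric] algebra_simps)

lemma odd_dvd_sum_lessThan:
  fixes p :: nat assumes "odd p" shows "p dvd (\<Sum>s<p. s)"
proof -
  obtain h where h: "p = 2 * h + 1" using assms oddE by blast
  have "(\<Sum>s<n. s) * 2 = n * (n - 1)" for n :: nat
  proof (induction n)
    case (Suc n) then show ?case by (cases n) (simp_all add: algebra_simps)
  qed simp
  moreover have "p - 1 = 2 * h" using h by simp
  ultimately have "(\<Sum>s<p. s) * 2 = p * h * 2" by simp
  then show ?thesis by simp
qed

lemma prod_unity_root_linear:
  assumes "odd p" shows "(\<Prod>q<p. unity_root p (k + l * q)) = 1"
proof -
  have "(\<Sum>q<p. k + l * q) = p * k + l * (\<Sum>q<p. q)"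
    by (simp add: sum.distrib sum_distrib_left)
  then have "p dvd (\<Sum>q<p. k + l * q)"
    using odd_dvd_sum_lessThan[OF assms] by simp
  then show ?thesis
    by (simp add: unity_root_dvd_eq_1 flip: unity_root_sum)
qed

section \<open>Monomial matrices\<close>

text \<open>\<open>mono_mat p f b\<close> is \<open>S\<^sub>f X\<^sup>b\<close> with the shift \<open>b\<close> taken in \<open>\<int>\<^sub>p\<close>; its nonzero entry in
  row \<open>i\<close> sits in column \<open>shift_back p b i\<close>.\<close>

definition mono_mat :: "nat \<Rightarrow> (nat \<Rightarrow> complex) \<Rightarrow> int \<Rightarrow> complex mat" where
  "mono_mat p f b = mat p p (\<lambda>(i, j). if int i = (int j + b) mod int p then f i else 0)"

definition shift_back :: "nat \<Rightarrow> int \<Rightarrow> nat \<Rightarrow> nat" where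
  "shift_back p b i = nat ((int i - b) mod int p)"

lemma mono_mat_carrier [simp]: "mono_mat p f b \<in> carrier_mat p p"
  by (simp add: mono_mat_def)

lemma mono_mat_dim [simp]: "dim_row (mono_mat p f b) = p" "dim_col (mono_mat p f b) = p"
  by (simp_all add: mono_mat_def)

lemma mono_mat_entry:
  "i < p \<Longrightarrow> j < p \<Longrightarrow> mono_mat p f b $$ (i, j) = (if int i = (int j + b) mod int p then f i else 0)"
  by (simp add: mono_mat_def)

lemma int_shift_back: "p > 0 \<Longrightarrow> int (shift_back p b i) = (int i - b) mod int p"
  by (simp add: shift_back_def)

lemma shift_back_less: "p > 0 \<Longrightarrow> shift_back p b i < p"
  by (simp add: shift_back_def nat_less_iff)

lemma shift_back_0: "i < p \<Longrightarrow> shift_back p 0 i = i"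
  by (simp add: shift_back_def)

lemma shift_back_eq_iff:
  assumes "p > 0" "i < p" "k < p"
  shows "k = shift_back p b i \<longleftrightarrow> int i = (int k + b) mod int p"
proof
  assume "k = shift_back p b i"
  then have "(int k + b) mod int p = ((int i - b) mod int p + b) mod int p"
    using assms(1) by (simp add: int_shift_back)
  then show "int i = (int k + b) mod int p"
    using assms(2) by (simp add: mod_add_left_eq)
next
  assume "int i = (int k + b) mod int p"
  then have "(int i - b) mod int p = int k mod int p"
    by (simp add: mod_diff_left_eq)
  then show "k = shift_back p b i"
    using assms by (simp add: shift_back_def)
qed

lemma mono_mat_mult:
  assumes "p > 0"
  shows "mono_mat p f b * mono_mat p g c = mono_mat p (\<lambda>i. f i * g (shift_back p b i)) (b + c)"
proof (rule eq_matI)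
  fix i j assume "i < dim_row (mono_mat p (\<lambda>i. f i * g (shift_back p b i)) (b + c))"
    and "j < dim_col (mono_mat p (\<lambda>i. f i * g (shift_back p b i)) (b + c))"
  then have i: "i < p" and j: "j < p" by simp_all
  let ?k = "shift_back p b i"
  have k: "?k < p" using shift_back_less[OF assms] .
  have "(mono_mat p f b * mono_mat p g c) $$ (i, j) =
     (\<Sum>k<p. (if int i = (int k + b) mod int p then f i else 0) *
              (if int k = (int j + c) mod int p then g k else 0))"
    using i j by (simp add: mono_mat_def scalar_prod_def lessThan_atLeast0 row_def col_def)
  also have "\<dots> = (\<Sum>k<p. if k = ?k then f i * (if int k = (int j + c) mod int p then g k else 0) else 0)"
    using shift_back_eq_iff[OF assms i] by (intro sum.cong) auto
  also have "\<dots> = (if int ?k = (int j + c) mod int p then f i * g ?k else 0)"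
    using k by simp
  also have "int ?k = (int j + c) mod int p \<longleftrightarrow> [int i - b = int j + c] (mod int p)"
    using assms by (simp add: int_shift_back cong_def)
  also have "\<dots> \<longleftrightarrow> [int i = int j + (b + c)] (mod int p)"
    by (simp add: cong_iff_dvd_diff algebra_simps)
  also have "\<dots> \<longleftrightarrow> int i = (int j + (b + c)) mod int p"
    using i by (simp add: cong_def)
  finally show "(mono_mat p f b * mono_mat p g c) $$ (i, j)
      = mono_mat p (\<lambda>i. f i * g (shift_back p b i)) (b + c) $$ (i, j)"
    using i j by (simp add: mono_mat_entry)
qed auto

lemma mono_mat_cong:
  assumes "\<And>i. i < p \<Longrightarrow> f i = g i" "[b = c] (mod int p)"
  shows "mono_mat p f b = mono_mat p g c"
proof -
  have "(int j + b) mod int p = (int j + c) mod int p" for j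
    using assms(2) unfolding cong_def by (metis mod_add_right_eq)
  then show ?thesis
    unfolding mono_mat_def using assms(1) by (intro eq_matI) auto
qed

lemma mono_mat_eq_imp:
  assumes "p > 0" and nonzero: "\<And>i. i < p \<Longrightarrow> f i \<noteq> 0"
    and eq: "mono_mat p f b = mono_mat p g c"
  shows "[b = c] (mod int p)" and "\<And>i. i < p \<Longrightarrow> g i = f i"
proof -
  have entry: "int i = (int (shift_back p b i) + c) mod int p \<and> g i = f i" if "i < p" for i
  proof -
    have k: "shift_back p b i < p" using shift_back_less[OF assms(1)] .
    have "int i = (int (shift_back p b i) + b) mod int p"
      using shift_back_eq_iff[OF assms(1) that k, of b] by simp
    then show ?thesis
      using arg_cong[OF eq, of "\<lambda>A. A $$ (i, shift_back p b i)"] nonzero[OF that] that k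
      by (auto simp: mono_mat_entry split: if_splits)
  qed
  then show "\<And>i. i < p \<Longrightarrow> g i = f i" by blast
  let ?k = "shift_back p b 0"
  have "int 0 = (int ?k + b) mod int p"
    using shift_back_eq_iff[OF assms(1) assms(1) shift_back_less[OF assms(1), of b 0], of b] by simp
  then have "[int ?k + b = int ?k + c] (mod int p)"
    using entry[OF assms(1)] by (simp add: cong_def)
  then show "[b = c] (mod int p)"
    by (simp add: cong_add_lcancel)
qed

lemma Smat_eq_mono_mat: "Smat p \<xi> = mono_mat p \<xi> 0"
  unfolding Smat_def mat_diag_def mono_mat_def by (intro eq_matI) auto

lemma Xmat_eq_mono_mat: "Xmat p = mono_mat p (\<lambda>_. 1) 1"
proof -
  have "i = (j + 1) mod p \<longleftrightarrow> int i = (int j + 1) mod int p" for i j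
    by (metis of_nat_1 of_nat_add of_nat_eq_iff zmod_int)
  then show ?thesis
    unfolding Xmat_def mono_mat_def by (intro eq_matI) auto
qed

lemma smult_one_eq_mono_mat: "a \<cdot>\<^sub>m 1\<^sub>m p = mono_mat p (\<lambda>_. a) 0"
  unfolding mono_mat_def by (intro eq_matI) auto

lemma one_eq_mono_mat: "1\<^sub>m p = mono_mat p (\<lambda>_. 1) 0"
  unfolding mono_mat_def by (intro eq_matI) auto

lemma mono_mat_power:
  assumes "p > 0"
  shows "mono_mat p f b ^\<^sub>m n = mono_mat p (\<lambda>i. \<Prod>s<n. f (shift_back p (int s * b) i)) (int n * b)"
proof (induction n)
  case (Suc n)
  then show ?case
    by (simp add: mono_mat_mult[OF assms] algebra_simps)
qed (simp add: one_eq_mono_mat)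

lemma mono_mat_diag_eq_one_iff:
  assumes "p > 0" shows "mono_mat p f 0 = 1\<^sub>m p \<longleftrightarrow> (\<forall>i<p. f i = 1)"
proof
  assume eq: "mono_mat p f 0 = 1\<^sub>m p"
  show "\<forall>i<p. f i = 1"
  proof (intro allI impI)
    fix i assume "i < p"
    then show "f i = 1" using arg_cong[OF eq, of "\<lambda>A. A $$ (i, i)"] by (simp add: mono_mat_entry)
  qed
qed (auto simp: one_eq_mono_mat intro: mono_mat_cong)

lemma bij_betw_affine_mod:
  assumes p: "prime p" and u: "\<not> int p dvd u"
  shows "bij_betw (\<lambda>s. nat ((u * int s + v) mod int p)) {..<p} {..<p}"
proof -
  have p0: "p > 0" using p prime_gt_0_nat by blast
  have "inj_on (\<lambda>s. nat ((u * int s + v) mod int p)) {..<p}"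
  proof (rule inj_onI)
    fix s t assume s: "s \<in> {..<p}" and t: "t \<in> {..<p}"
      and "nat ((u * int s + v) mod int p) = nat ((u * int t + v) mod int p)"
    then have "[u * int s + v = u * int t + v] (mod int p)"
      using p0 by (simp add: cong_def eq_nat_nat_iff)
    then have "int p dvd u * (int s - int t)"
      by (simp add: cong_iff_dvd_diff algebra_simps)
    then have "[int s = int t] (mod int p)"
      using u p by (simp add: cong_iff_dvd_diff prime_dvd_mult_iff prime_nat_int_transfer)
    then show "s = t"
      using s t by (simp add: cong_int_iff cong_less_modulus_unique_nat)
  qed
  moreover have "(\<lambda>s. nat ((u * int s + v) mod int p)) ` {..<p} \<subseteq> {..<p}"
    using p0 by (auto simp: nat_less_iff)
  ultimately show ?thesis
    by (simp add: bij_betw_def endo_inj_surj)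
qed

lemma prod_shift_back:
  assumes "prime p" shows "(\<Prod>i<p. g (shift_back p b i)) = (\<Prod>i<p. g i)"
proof -
  have "\<not> int p dvd 1" using assms prime_gt_1_nat by auto
  from bij_betw_affine_mod[OF assms this, of "- b"]
  have "bij_betw (shift_back p b) {..<p} {..<p}"
    by (simp add: shift_back_def[abs_def])
  then show ?thesis by (rule prod.reindex_bij_betw)
qed

lemma prod_shift_back_multiples:
  assumes "prime p" "\<not> int p dvd b"
  shows "(\<Prod>s<p. f (shift_back p (int s * b) i)) = (\<Prod>q<p. f q)"
proof -
  have "bij_betw (\<lambda>s. shift_back p (int s * b) i) {..<p} {..<p}"
    using bij_betw_affine_mod[OF assms(1), of "- b" "int i"] assms(2)
    by (simp add: shift_back_def algebra_simps)
  then show ?thesis by (rule prod.reindex_bij_betw)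
qed

lemma mono_mat_power_prime:
  assumes "prime p" "\<not> int p dvd b" "(\<Prod>q<p. f q) = 1"
  shows "mono_mat p f b ^\<^sub>m p = 1\<^sub>m p"
proof -
  have "p > 0" using assms(1) prime_gt_0_nat by blast
  then have "mono_mat p f b ^\<^sub>m p = mono_mat p (\<lambda>i. \<Prod>s<p. f (shift_back p (int s * b) i)) (int p * b)"
    by (rule mono_mat_power)
  also have "\<dots> = 1\<^sub>m p"
    unfolding one_eq_mono_mat
    by (rule mono_mat_cong) (simp_all add: prod_shift_back_multiples[OF assms(1,2)] assms(3) cong_def)
  finally show ?thesis .
qed

lemma mono_mat_shift_power_prime:
  assumes "prime p" "(\<Prod>q<p. f q) = 1"
  shows "mono_mat p f 1 ^\<^sub>m p = 1\<^sub>m p"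
  using mono_mat_power_prime[OF assms(1) _ assms(2)] prime_gt_1_nat[OF assms(1)] by simp

lemma Smat_mult_Xmat_power:
  assumes "p > 0" shows "Smat p \<xi> * Xmat p ^\<^sub>m b = mono_mat p \<xi> (int b)"
  unfolding Smat_eq_mono_mat Xmat_eq_mono_mat mono_mat_power[OF assms] mono_mat_mult[OF assms]
  by simp

section \<open>The group \<open>K\<close> in monomial form\<close>

text \<open>\<open>S\<^sub>f \<in> T\<^sub>(\<^sub>p\<^sup>m\<^sub>)\<close>, constraining only the values of \<open>f\<close> on \<open>{..<p}\<close>; \<open>Qset\<close> additionally
  normalises the values outside to \<open>1\<close>, which \<open>pad_one\<close> restores.\<close>

definition diag_in_T :: "nat \<Rightarrow> nat \<Rightarrow> (nat \<Rightarrow> complex) \<Rightarrow> bool" where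
  "diag_in_T p m f \<longleftrightarrow> (\<forall>q<p. f q ^ p ^ m = 1) \<and> (\<Prod>q<p. f q) = 1"

definition pad_one :: "nat \<Rightarrow> (nat \<Rightarrow> complex) \<Rightarrow> nat \<Rightarrow> complex" where
  "pad_one p f q = (if q < p then f q else 1)"

lemma diag_in_T_nonzero: "diag_in_T p m f \<Longrightarrow> q < p \<Longrightarrow> f q \<noteq> 0"
  by (auto simp: diag_in_T_def power_0_left)

lemma diag_in_T_pad_one [simp]: "diag_in_T p m (pad_one p f) = diag_in_T p m f"
  by (simp add: diag_in_T_def pad_one_def)

lemma diag_in_T_mult_shift:
  assumes "prime p" "diag_in_T p m f" "diag_in_T p m g"
  shows "diag_in_T p m (\<lambda>i. f i * g (shift_back p b i))"
proof -
  have "p > 0" using assms(1) prime_gt_0_nat by blast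
  then show ?thesis
    using assms shift_back_less[of p b] prod_shift_back[OF assms(1), of g b]
    by (simp add: diag_in_T_def power_mult_distrib prod.distrib)
qed

lemma mono_mat_power_diag_in_T:
  assumes "prime p" "diag_in_T p m f"
  shows "\<exists>g. diag_in_T p m g \<and> mono_mat p f b ^\<^sub>m n = mono_mat p g (int n * b)"
proof (induction n)
  case 0
  show ?case by (intro exI[of _ "\<lambda>_. 1"]) (simp add: one_eq_mono_mat diag_in_T_def)
next
  case (Suc n)
  then obtain g where "diag_in_T p m g" "mono_mat p f b ^\<^sub>m n = mono_mat p g (int n * b)"
    by blast
  moreover have "p > 0" using assms(1) prime_gt_0_nat by blast
  ultimately show ?case
    using diag_in_T_mult_shift[OF assms(1) _ assms(2)] by (auto simp: mono_mat_mult algebra_simps)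
qed

lemma Smat_power:
  assumes "p > 0" shows "Smat p \<xi> ^\<^sub>m n = mono_mat p (\<lambda>i. \<xi> i ^ n) 0"
  unfolding Smat_eq_mono_mat mono_mat_power[OF assms]
  by (rule mono_mat_cong) (simp_all add: shift_back_0)

lemma Qset_iff:
  assumes "p > 0"
  shows "\<xi> \<in> Qset p m \<longleftrightarrow> diag_in_T p m \<xi> \<and> (\<forall>q\<ge>p. \<xi> q = 1)"
proof -
  have "norm z = 1" if "z ^ p ^ m = 1" for z :: complex
  proof -
    have "norm z ^ p ^ m = 1 ^ p ^ m" using that by (metis norm_one norm_power power_one)
    then show ?thesis using assms power_eq_iff_eq_base[of "p ^ m" "norm z" 1] by simp
  qed
  then show ?thesis
    unfolding Qset_def diag_in_T_def Smat_power[OF assms] mono_mat_diag_eq_one_iff[OF assms]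
    by auto
qed

lemma pad_one_in_Qset: "p > 0 \<Longrightarrow> diag_in_T p m f \<Longrightarrow> pad_one p f \<in> Qset p m"
  by (simp add: Qset_iff pad_one_def)

lemma mono_mat_eq_Smat_Xmat:
  assumes "p > 0"
  shows "mono_mat p f b = Smat p (pad_one p f) * Xmat p ^\<^sub>m nat (b mod int p)"
  unfolding Smat_mult_Xmat_power[OF assms] using assms
  by (intro mono_mat_cong) (auto simp: pad_one_def cong_def)

lemma
  assumes "p > 0" "diag_in_T p m f"
  shows dec_b_mono_mat: "dec_b p m (mono_mat p f b) = nat (b mod int p)"
    and dec_xi_mono_mat: "dec_xi p m (mono_mat p f b) = pad_one p f"
proof -
  have nonzero: "\<And>i. i < p \<Longrightarrow> f i \<noteq> 0" using diag_in_T_nonzero[OF assms(2)] .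
  have unique: "b mod int p = int b' \<and> (\<forall>i<p. \<xi> i = f i)"
    if "b' < p" "mono_mat p f b = Smat p \<xi> * Xmat p ^\<^sub>m b'" for b' \<xi>
    using mono_mat_eq_imp[of p f b \<xi> "int b'"] assms(1) nonzero that
    by (simp add: Smat_mult_Xmat_power[OF assms(1)] cong_def)
  have lt: "nat (b mod int p) < p" using assms(1) by (simp add: nat_less_iff)
  note in_Qset = pad_one_in_Qset[OF assms] and decomp = mono_mat_eq_Smat_Xmat[OF assms(1), of f b]
  show "dec_b p m (mono_mat p f b) = nat (b mod int p)"
    unfolding dec_b_def
  proof (rule the_equality)
    show "nat (b mod int p) < p \<and> (\<exists>\<xi>\<in>Qset p m. mono_mat p f b = Smat p \<xi> * Xmat p ^\<^sub>m nat (b mod int p))"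
      using lt in_Qset decomp by blast
  qed (use unique in force)
  show "dec_xi p m (mono_mat p f b) = pad_one p f"
    unfolding dec_xi_def
  proof (rule the_equality)
    show "pad_one p f \<in> Qset p m \<and> (\<exists>b'<p. mono_mat p f b = Smat p (pad_one p f) * Xmat p ^\<^sub>m b')"
      using lt in_Qset decomp by blast
  next
    fix \<xi> assume "\<xi> \<in> Qset p m \<and> (\<exists>b'<p. mono_mat p f b = Smat p \<xi> * Xmat p ^\<^sub>m b')"
    then show "\<xi> = pad_one p f"
      using unique Qset_iff[OF assms(1)] by (auto simp: pad_one_def fun_eq_iff not_less)
  qed
qed

lemma Kset_mono_mat_dec_b:
  assumes "p > 0" "M \<in> Kset p m"
  obtains f where "diag_in_T p m f" "M = mono_mat p f (int (dec_b p m M))" "dec_b p m M < p"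
proof -
  obtain f b where "f \<in> Qset p m" and M: "M = mono_mat p f (int b)"
    using assms(2) Smat_mult_Xmat_power[OF assms(1)] unfolding Kset_def by blast
  then have f: "diag_in_T p m f" using Qset_iff[OF assms(1)] by blast
  have "M = mono_mat p f (int (dec_b p m M))"
    unfolding M dec_b_mono_mat[OF assms(1) f] using assms(1)
    by (intro mono_mat_cong) (simp_all add: cong_def)
  moreover have "dec_b p m M < p"
    unfolding M dec_b_mono_mat[OF assms(1) f] using assms(1) by (simp add: nat_less_iff)
  ultimately show ?thesis using f that by blast
qed

lemma Kset_power_prime:
  assumes "prime p" "M \<in> Kset p m" "dec_b p m M \<noteq> 0"
  shows "M ^\<^sub>m p = 1\<^sub>m p"
proof -
  have p0: "p > 0" using assms(1) prime_gt_0_nat by blast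
  define b where "b = dec_b p m M"
  obtain f where f: "diag_in_T p m f" and M: "M = mono_mat p f (int b)" and "b < p"
    using Kset_mono_mat_dec_b[OF p0 assms(2)] unfolding b_def .
  then have "\<not> int p dvd int b"
    using assms(3) by (auto simp: b_def dest: zdvd_imp_le)
  then show ?thesis
    unfolding M using mono_mat_power_prime[OF assms(1)] f by (simp add: diag_in_T_def)
qed

lemma mono_mat_factor_power:
  assumes "prime p" "diag_in_T p m f" "diag_in_T p m g"
  obtains \<zeta> where "diag_in_T p m \<zeta>" "mono_mat p f (int b) = mono_mat p \<zeta> 0 * mono_mat p g 1 ^\<^sub>m b"
proof -
  have p0: "p > 0" using assms(1) prime_gt_0_nat by blast
  obtain h where h: "diag_in_T p m h" "mono_mat p g 1 ^\<^sub>m b = mono_mat p h (int b * 1)"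
    using mono_mat_power_diag_in_T[OF assms(1,3)] by blast
  have "diag_in_T p m (\<lambda>i. f i / h i)"
    using assms(2) h(1) by (simp add: diag_in_T_def power_divide prod_dividef)
  moreover have "mono_mat p f (int b) = mono_mat p (\<lambda>i. f i / h i) 0 * mono_mat p g 1 ^\<^sub>m b"
    unfolding h(2) mono_mat_mult[OF p0]
    by (rule mono_mat_cong) (simp_all add: shift_back_0 diag_in_T_nonzero[OF h(1)])
  ultimately show ?thesis by (rule that)
qed

section \<open>Polynomial functions modulo \<open>p\<close> and the expansion \<open>\<vartheta>\<close>\<close>

definition coeff_poly :: "nat \<Rightarrow> (nat \<Rightarrow> nat) \<Rightarrow> nat \<Rightarrow> nat" where
  "coeff_poly p c q = (\<Sum>a<p. c a * q ^ a)"

lemma coeff_poly_cong: "(\<And>a. a < p \<Longrightarrow> c a = c' a) \<Longrightarrow> coeff_poly p c = coeff_poly p c'"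
  unfolding coeff_poly_def by (intro ext sum.cong) auto

lemma coeff_poly_linear:
  assumes "p \<ge> 2" "\<And>a. a < p \<Longrightarrow> c a = (if a = 0 then x else if a = 1 then y else 0)"
  shows "coeff_poly p c q = x + y * q"
proof -
  have "coeff_poly p c q = (\<Sum>a\<in>{0, 1}. (if a = 0 then x else if a = 1 then y else 0) * q ^ a)"
    unfolding coeff_poly_def using assms by (intro sum.mono_neutral_cong_right) auto
  then show ?thesis by simp
qed

lemma fermat_power_diff:
  assumes "prime p" "odd p" "q < p" "r < p" "q \<noteq> r"
  shows "[(int q - int r) ^ (p - 1) = 1] (mod int p)"
proof -
  define d where "d = nat \<bar>int q - int r\<bar>"
  have "0 < d" "d < p" using assms(3-5) by (auto simp: d_def)
  then have "\<not> p dvd d" by (meson nat_dvd_not_less)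
  then have "[d ^ (p - 1) = 1] (mod p)" using fermat_theorem assms(1) by blast
  then have "[int d ^ (p - 1) = 1] (mod int p)" by (metis cong_int_iff of_nat_1 of_nat_power)
  moreover have "int d ^ (p - 1) = (int q - int r) ^ (p - 1)"
    using assms(2) by (simp add: d_def power_even_abs)
  ultimately show ?thesis by simp
qed

text \<open>The interpolating polynomial \<open>\<Sum>\<^sub>r w r (1 - (x - r)\<^sup>p\<^sup>-\<^sup>1)\<close>, by Fermat's little theorem.\<close>

lemma interpolating_poly_mod_p:
  fixes w :: "nat \<Rightarrow> int"
  assumes "prime p" "odd p"
  obtains L :: "int poly" where "degree L \<le> p - 1" "\<And>q. q < p \<Longrightarrow> [poly L (int q) = w q] (mod int p)"
proof -
  define L :: "int poly" where "L = (\<Sum>r<p. smult (w r) (1 - [:- int r, 1:] ^ (p - 1)))"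
  have "[poly L (int q) = w q] (mod int p)" if q: "q < p" for q
  proof -
    have "[(\<Sum>r<p. w r * (1 - (int q - int r) ^ (p - 1))) = (\<Sum>r<p. if r = q then w r else 0)] (mod int p)"
    proof (rule cong_sum)
      fix r assume r: "r \<in> {..<p}"
      show "[w r * (1 - (int q - int r) ^ (p - 1)) = (if r = q then w r else 0)] (mod int p)"
      proof (cases "r = q")
        case False
        then have "[1 - (int q - int r) ^ (p - 1) = 1 - 1] (mod int p)"
          using fermat_power_diff[OF assms q] r by (intro cong_diff) auto
        then show ?thesis using False cong_scalar_left by fastforce
      qed (use prime_gt_1_nat[OF assms(1)] in \<open>simp add: power_0_left\<close>)
    qed
    then show ?thesis using q by (simp add: L_def poly_sum)
  qed
  moreover have "degree L \<le> p - 1"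
    unfolding L_def
  proof (rule degree_sum_le)
    fix r
    have "degree ([:- int r, 1:] ^ (p - 1)) \<le> p - 1"
      using degree_power_le[of "[:- int r, 1:]" "p - 1"] by simp
    then have "degree (1 - [:- int r, 1:] ^ (p - 1)) \<le> p - 1"
      by (intro degree_diff_le) auto
    then show "degree (smult (w r) (1 - [:- int r, 1:] ^ (p - 1))) \<le> p - 1"
      using degree_smult_le order_trans by blast
  qed simp
  ultimately show ?thesis using that by blast
qed

lemma mod_p_interpolation:
  fixes w :: "nat \<Rightarrow> int"
  assumes "prime p" "odd p"
  obtains c where "\<And>a. c a < p" "\<And>q. q < p \<Longrightarrow> [int (coeff_poly p c q) = w q] (mod int p)"
proof -
  have p1: "p > 1" using assms prime_gt_1_nat by blast
  obtain L where L: "degree L \<le> p - 1" "\<And>q. q < p \<Longrightarrow> [poly L (int q) = w q] (mod int p)"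
    using interpolating_poly_mod_p[OF assms, of w] by blast
  then have L_sum: "poly L x = (\<Sum>a<p. coeff L a * x ^ a)" for x
    unfolding poly_altdef using p1
    by (intro sum.mono_neutral_left) (auto simp: coeff_eq_0)
  define c where "c a = nat (coeff L a mod int p)" for a
  have "[int (coeff_poly p c q) = w q] (mod int p)" if "q < p" for q
  proof -
    have "int (coeff_poly p c q) = (\<Sum>a<p. (coeff L a mod int p) * int q ^ a)"
      using p1 by (simp add: coeff_poly_def c_def)
    also have "[\<dots> = poly L (int q)] (mod int p)"
      unfolding L_sum by (intro cong_sum cong_mult) auto
    finally show ?thesis using L(2)[OF that] by (rule cong_trans)
  qed
  moreover have "c a < p" for a using p1 by (simp add: c_def nat_less_iff)
  ultimately show ?thesis using that by blast
qed

lemma coeff_poly_mod_surj: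
  assumes "prime p" "odd p"
  shows "(\<lambda>c. restrict (\<lambda>q. coeff_poly p c q mod p) {..<p}) ` (PiE {..<p} (\<lambda>_. {..<p}))
    = PiE {..<p} (\<lambda>_. {..<p})"
proof -
  define A where "A = (PiE {..<p} (\<lambda>_. {..<p}) :: (nat \<Rightarrow> nat) set)"
  define F where "F = (\<lambda>c. restrict (\<lambda>q. coeff_poly p c q mod p) {..<p})"
  have p0: "p > 0" using assms prime_gt_0_nat by blast
  have coeff_poly_restrict: "coeff_poly p (restrict c {..<p}) = coeff_poly p c" for c
    by (rule coeff_poly_cong) simp
  have "F ` A \<subseteq> A"
  proof
    fix x assume "x \<in> F ` A"
    then obtain c where "x = F c" by blast
    then show "x \<in> A" unfolding F_def A_def using p0 by (simp add: restrict_PiE_iff)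
  qed
  moreover have "A \<subseteq> F ` A"
  proof
    fix g assume g: "g \<in> A"
    obtain d where d: "\<And>a. d a < p" "\<And>q. q < p \<Longrightarrow> [int (coeff_poly p d q) = int (g q)] (mod int p)"
      using mod_p_interpolation[OF assms, of "\<lambda>q. int (g q)"] by blast
    have "coeff_poly p d q mod p = g q" if "q < p" for q
    proof -
      have "[coeff_poly p d q = g q] (mod p)" using d(2)[OF that] by (simp only: cong_int_iff)
      then show ?thesis using PiE_mem[OF g[unfolded A_def], of q] that by (simp add: cong_def)
    qed
    then have "F (restrict d {..<p}) = restrict g {..<p}"
      unfolding F_def coeff_poly_restrict by (intro restrict_ext) simp
    also have "restrict g {..<p} = g"
      using g unfolding A_def by (rule PiE_restrict)
    finally have "F (restrict d {..<p}) = g" .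
    moreover have "restrict d {..<p} \<in> A" using d(1) by (simp add: A_def restrict_PiE_iff)
    ultimately show "g \<in> F ` A" by (metis image_eqI)
  qed
  ultimately show ?thesis unfolding F_def A_def by blast
qed

text \<open>Uniqueness by counting: a surjection of a finite set onto itself is injective.\<close>

lemma mod_p_interpolation_unique:
  assumes "prime p" "odd p" "\<And>a. a < p \<Longrightarrow> c a < p" "\<And>a. a < p \<Longrightarrow> c' a < p"
    and eq: "\<And>q. q < p \<Longrightarrow> [coeff_poly p c q = coeff_poly p c' q] (mod p)"
  shows "\<And>a. a < p \<Longrightarrow> c a = c' a"
proof -
  define A where "A = (PiE {..<p} (\<lambda>_. {..<p}) :: (nat \<Rightarrow> nat) set)"
  define F where "F c = restrict (\<lambda>q. coeff_poly p c q mod p) {..<p}" for c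
  have "F ` A = A" using coeff_poly_mod_surj[OF assms(1,2)] by (simp add: F_def[abs_def] A_def)
  moreover have "finite A" unfolding A_def by (intro finite_PiE) auto
  ultimately have "inj_on F A" using eq_card_imp_inj_on[of A F] by (simp only:)
  moreover have "coeff_poly p (restrict c {..<p}) = coeff_poly p c" for c
    by (rule coeff_poly_cong) simp
  then have "F (restrict c {..<p}) = F (restrict c' {..<p})"
    unfolding F_def using eq by (intro restrict_ext) (simp add: cong_def)
  moreover have "restrict c {..<p} \<in> A" "restrict c' {..<p} \<in> A"
    using assms(3,4) by (simp_all add: A_def restrict_PiE_iff)
  ultimately have "restrict c {..<p} = restrict c' {..<p}" by (rule inj_onD)
  then show "\<And>a. a < p \<Longrightarrow> c a = c' a" by (metis lessThan_iff restrict_apply')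
qed

definition theta_value :: "nat \<Rightarrow> nat \<Rightarrow> (nat \<Rightarrow> nat \<Rightarrow> nat) \<Rightarrow> nat \<Rightarrow> nat" where
  "theta_value p m \<theta> q = (\<Sum>j\<in>{1..m}. p ^ (m - j) * coeff_poly p (\<theta> j) q)"

definition theta_expansion :: "nat \<Rightarrow> nat \<Rightarrow> (nat \<Rightarrow> complex) \<Rightarrow> (nat \<Rightarrow> nat \<Rightarrow> nat) \<Rightarrow> bool" where
  "theta_expansion p m \<xi> \<theta> \<longleftrightarrow> (\<forall>j a. \<theta> j a < p) \<and>
      (\<forall>j a. (j < 1 \<or> j > m \<or> a \<ge> p) \<longrightarrow> \<theta> j a = 0) \<and>
      (\<forall>q<p. \<xi> q = unity_root (p ^ m) (theta_value p m \<theta> q))"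

lemma exp_theta_sum_eq_unity_root:
  assumes "p > 0"
  shows "exp (\<Sum>j\<in>{1..m}. 2 * of_real pi * \<i> / of_nat (p ^ j) * of_nat (\<Sum>a<p. \<theta> j a * q ^ a))
    = unity_root (p ^ m) (theta_value p m \<theta> q)"
proof -
  have "exp (\<Sum>j\<in>{1..m}. 2 * of_real pi * \<i> / of_nat (p ^ j) * of_nat (\<Sum>a<p. \<theta> j a * q ^ a))
      = (\<Prod>j\<in>{1..m}. unity_root (p ^ j) (coeff_poly p (\<theta> j) q))"
    unfolding exp_sum[OF finite_atLeastAtMost] unity_root_def coeff_poly_def
    by (intro prod.cong refl arg_cong[where f = exp]) simp
  also have "\<dots> = (\<Prod>j\<in>{1..m}. unity_root (p ^ m) (p ^ (m - j) * coeff_poly p (\<theta> j) q))"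
  proof (rule prod.cong)
    fix j assume "j \<in> {1..m}"
    then have "p ^ m = p ^ (m - j) * p ^ j" by (simp flip: power_add)
    then show "unity_root (p ^ j) (coeff_poly p (\<theta> j) q)
        = unity_root (p ^ m) (p ^ (m - j) * coeff_poly p (\<theta> j) q)"
      using assms by (simp add: unity_root_scale)
  qed simp
  also have "\<dots> = unity_root (p ^ m) (theta_value p m \<theta> q)"
    unfolding theta_value_def by (simp add: unity_root_sum)
  finally show ?thesis .
qed

lemma theta_eq_The: "p > 0 \<Longrightarrow> theta p m \<xi> = (THE \<theta>. theta_expansion p m \<xi> \<theta>)"
  unfolding theta_def theta_expansion_def exp_theta_sum_eq_unity_root ..

lemma theta_value_Suc: "theta_value p (Suc m) \<theta> q = p * theta_value p m \<theta> q + coeff_poly p (\<theta> (Suc m)) q"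
proof -
  have "{1..Suc m} = insert (Suc m) {1..m}" by auto
  then have "theta_value p (Suc m) \<theta> q
      = coeff_poly p (\<theta> (Suc m)) q + (\<Sum>j\<in>{1..m}. p ^ (Suc m - j) * coeff_poly p (\<theta> j) q)"
    unfolding theta_value_def by simp
  also have "(\<Sum>j\<in>{1..m}. p ^ (Suc m - j) * coeff_poly p (\<theta> j) q) = p * theta_value p m \<theta> q"
    unfolding theta_value_def sum_distrib_left by (intro sum.cong refl) (simp add: Suc_diff_le)
  finally show ?thesis by simp
qed

text \<open>The coefficient vectors \<open>\<theta> j\<close> are the base-\<open>p\<close> digits of \<open>theta_value\<close>, the last digit
  \<open>\<theta> m\<close> being read off modulo \<open>p\<close> by interpolation.\<close>

lemma theta_value_unique:
  assumes "prime p" "odd p" "\<forall>j a. \<theta> j a < p" "\<forall>j a. \<theta>' j a < p"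
    and "\<forall>q<p. [theta_value p m \<theta> q = theta_value p m \<theta>' q] (mod p ^ m)"
  shows "\<forall>j\<in>{1..m}. \<forall>a<p. \<theta> j a = \<theta>' j a"
  using assms(5)
proof (induction m)
  case (Suc m)
  have p0: "p > 0" using assms(1) prime_gt_0_nat by blast
  have "[coeff_poly p (\<theta> (Suc m)) q = coeff_poly p (\<theta>' (Suc m)) q] (mod p)" if "q < p" for q
  proof -
    have "[theta_value p (Suc m) \<theta> q = theta_value p (Suc m) \<theta>' q] (mod p)"
      using Suc.prems that cong_dvd_modulus_nat[of _ _ "p ^ Suc m" p] by simp
    then show ?thesis unfolding theta_value_Suc cong_def by simp
  qed
  then have last: "\<forall>a<p. \<theta> (Suc m) a = \<theta>' (Suc m) a"
    using mod_p_interpolation_unique[OF assms(1,2)] assms(3,4) by blast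
  then have "coeff_poly p (\<theta> (Suc m)) = coeff_poly p (\<theta>' (Suc m))"
    by (intro coeff_poly_cong) auto
  then have "[p * theta_value p m \<theta> q = p * theta_value p m \<theta>' q] (mod p * p ^ m)" if "q < p" for q
    using Suc.prems that unfolding theta_value_Suc by (simp add: cong_add_rcancel_nat)
  then have "\<forall>q<p. [theta_value p m \<theta> q = theta_value p m \<theta>' q] (mod p ^ m)"
    using p0 by (simp add: cong_def mod_mult_mult1)
  with Suc.IH last show ?case by (auto simp: le_Suc_eq)
qed simp

lemma theta_expansion_unique:
  assumes "prime p" "odd p" "theta_expansion p m \<xi> \<theta>" "theta_expansion p m \<xi> \<theta>'"
  shows "\<theta> = \<theta>'"
proof (intro ext)
  fix j a
  have p0: "p > 0" using assms(1) prime_gt_0_nat by blast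
  have "\<forall>q<p. [theta_value p m \<theta> q = theta_value p m \<theta>' q] (mod p ^ m)"
    using assms(3,4) p0 by (simp add: theta_expansion_def flip: unity_root_eq_iff)
  then have "\<forall>j\<in>{1..m}. \<forall>a<p. \<theta> j a = \<theta>' j a"
    using theta_value_unique[OF assms(1,2)] assms(3,4) by (simp add: theta_expansion_def)
  moreover have "\<forall>j a. (j < 1 \<or> j > m \<or> a \<ge> p) \<longrightarrow> \<theta> j a = 0 \<and> \<theta>' j a = 0"
    using assms(3,4) unfolding theta_expansion_def by simp
  ultimately show "\<theta> j a = \<theta>' j a"
    by (metis atLeastAtMost_iff linorder_not_le)
qed

lemma theta_eqI: "prime p \<Longrightarrow> odd p \<Longrightarrow> theta_expansion p m \<xi> \<theta> \<Longrightarrow> theta p m \<xi> = \<theta>"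
  by (simp add: theta_eq_The prime_gt_0_nat the_equality theta_expansion_unique)

lemma theta_value_exists:
  assumes "prime p" "odd p"
  shows "\<exists>\<theta>. (\<forall>j a. \<theta> j a < p) \<and> (\<forall>j a. (j < 1 \<or> j > m \<or> a \<ge> p) \<longrightarrow> \<theta> j a = 0) \<and>
           (\<forall>q<p. [int (theta_value p m \<theta> q) = w q] (mod int (p ^ m)))"
proof (induction m arbitrary: w)
  case 0
  have "p > 0" using assms(1) prime_gt_0_nat by blast
  then show ?case by (intro exI[of _ "\<lambda>_ _. 0"]) simp
next
  case (Suc m)
  have p0: "p > 0" using assms(1) prime_gt_0_nat by blast
  obtain c where c: "\<And>a. c a < p" "\<And>q. q < p \<Longrightarrow> [int (coeff_poly p c q) = w q] (mod int p)"
    using mod_p_interpolation[OF assms] by blast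
  define w' where "w' q = (w q - int (coeff_poly p c q)) div int p" for q
  obtain \<theta>0 where \<theta>0: "\<forall>j a. \<theta>0 j a < p" "\<forall>j a. (j < 1 \<or> j > m \<or> a \<ge> p) \<longrightarrow> \<theta>0 j a = 0"
     "\<forall>q<p. [int (theta_value p m \<theta>0 q) = w' q] (mod int (p ^ m))"
    using Suc.IH[of w'] by blast
  define \<theta> where "\<theta> j a = (if j = Suc m then (if a < p then c a else 0) else \<theta>0 j a)" for j a
  have "\<theta> j = \<theta>0 j" if "j \<le> m" for j
    using that by (simp add: \<theta>_def fun_eq_iff)
  then have "theta_value p m \<theta> q = theta_value p m \<theta>0 q" for q
    unfolding theta_value_def by (intro sum.cong refl) simp
  moreover have "coeff_poly p (\<theta> (Suc m)) = coeff_poly p c"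
    by (intro coeff_poly_cong) (simp add: \<theta>_def)
  moreover have "w q = int p * w' q + int (coeff_poly p c q)" if "q < p" for q
    using c(2)[OF that] unfolding w'_def by (simp add: cong_iff_dvd_diff dvd_diff_commute)
  moreover have "[int p * int (theta_value p m \<theta>0 q) = int p * w' q] (mod int p * int (p ^ m))"
    if "q < p" for q
    using \<theta>0(3) that p0 by (simp add: cong_def mod_mult_mult1)
  ultimately have "[int (theta_value p (Suc m) \<theta> q) = w q] (mod int (p ^ Suc m))" if "q < p" for q
    using that unfolding theta_value_Suc by (simp add: cong_add_rcancel)
  moreover have "\<forall>j a. \<theta> j a < p" "\<forall>j a. (j < 1 \<or> j > Suc m \<or> a \<ge> p) \<longrightarrow> \<theta> j a = 0"
    using c(1) \<theta>0(1,2) p0 by (simp_all add: \<theta>_def)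
  ultimately show ?case by blast
qed

lemma theta_expansion_theta:
  assumes "prime p" "odd p" "\<forall>q<p. \<xi> q ^ p ^ m = 1"
  shows "theta_expansion p m \<xi> (theta p m \<xi>)"
proof -
  have p0: "p > 0" using assms(1) prime_gt_0_nat by blast
  have "\<exists>v. \<xi> q = unity_root (p ^ m) v" if "q < p" for q
    using root_of_unity_eq_unity_root[of "p ^ m" "\<xi> q"] assms(3) that p0 by simp
  then obtain v where v: "\<forall>q<p. \<xi> q = unity_root (p ^ m) (v q)" by metis
  obtain \<theta> where \<theta>: "\<forall>j a. \<theta> j a < p" "\<forall>j a. (j < 1 \<or> j > m \<or> a \<ge> p) \<longrightarrow> \<theta> j a = 0"
     "\<forall>q<p. [int (theta_value p m \<theta> q) = int (v q)] (mod int (p ^ m))"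
    using theta_value_exists[OF assms(1,2), of m "\<lambda>q. int (v q)"] by blast
  have "theta_expansion p m \<xi> \<theta>"
    unfolding theta_expansion_def using \<theta> v p0
    by (simp add: unity_root_eq_iff cong_int_iff cong_sym_eq flip: of_nat_power)
  then show ?thesis using theta_eqI[OF assms(1,2)] by simp
qed

text \<open>Multiplying \<open>\<xi>\<close> by the linear character \<open>\<omega>\<^sup>k\<^sup>+\<^sup>l\<^sup>q\<close> changes only \<open>\<vartheta>\<^sub>1\<^sub>,\<^sub>0\<close> and \<open>\<vartheta>\<^sub>1\<^sub>,\<^sub>1\<close>.\<close>

definition twist_theta :: "nat \<Rightarrow> nat \<Rightarrow> nat \<Rightarrow> (nat \<Rightarrow> nat \<Rightarrow> nat) \<Rightarrow> nat \<Rightarrow> nat \<Rightarrow> nat" where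
  "twist_theta p k l \<theta> j a =
     (if j = 1 \<and> a = 0 then (\<theta> 1 0 + k) mod p
      else if j = 1 \<and> a = 1 then (\<theta> 1 1 + l) mod p else \<theta> j a)"

lemma theta_value_split:
  assumes "m \<ge> 1"
  shows "theta_value p m \<theta> q
    = p ^ (m - 1) * coeff_poly p (\<theta> 1) q + (\<Sum>j\<in>{2..m}. p ^ (m - j) * coeff_poly p (\<theta> j) q)"
proof -
  have "{1..m} = insert 1 {2..m}" using assms by auto
  then show ?thesis unfolding theta_value_def by simp
qed

lemma coeff_poly_twist_theta:
  assumes "p \<ge> 2"
  shows "[coeff_poly p (twist_theta p k l \<theta> 1) q = coeff_poly p (\<theta> 1) q + (k + l * q)] (mod p)"
proof -
  have "[coeff_poly p (twist_theta p k l \<theta> 1) q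
      = (\<Sum>a<p. (\<theta> 1 a + (if a = 0 then k else if a = 1 then l else 0)) * q ^ a)] (mod p)"
    unfolding coeff_poly_def
    by (intro cong_sum cong_mult) (auto simp: twist_theta_def cong_def mod_add_left_eq)
  also have "(\<Sum>a<p. (\<theta> 1 a + (if a = 0 then k else if a = 1 then l else 0)) * q ^ a)
      = coeff_poly p (\<theta> 1) q + (k + l * q)"
    unfolding distrib_right sum.distrib coeff_poly_def[symmetric]
    using coeff_poly_linear[OF assms, of "\<lambda>a. if a = 0 then k else if a = 1 then l else 0"]
    by (simp add: coeff_poly_def)
  finally show ?thesis .
qed

lemma theta_value_twist_theta:
  assumes "p \<ge> 2" "m \<ge> 1"
  shows "[theta_value p m (twist_theta p k l \<theta>) q
    = theta_value p m \<theta> q + p ^ (m - 1) * (k + l * q)] (mod p ^ m)"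
proof -
  let ?\<theta>' = "twist_theta p k l \<theta>"
  have "p ^ (m - 1) * p = p ^ m" using assms(2) by (simp flip: power_Suc2)
  then have digit1: "[p ^ (m - 1) * coeff_poly p (?\<theta>' 1) q
      = p ^ (m - 1) * (coeff_poly p (\<theta> 1) q + (k + l * q))] (mod p ^ m)"
    using coeff_poly_twist_theta[OF assms(1)] assms(1) by (metis cong_def mod_mult_mult1)
  have "?\<theta>' j = \<theta> j" if "j \<noteq> 1" for j using that by (simp add: twist_theta_def fun_eq_iff)
  then have rest: "(\<Sum>j\<in>{2..m}. p ^ (m - j) * coeff_poly p (?\<theta>' j) q)
      = (\<Sum>j\<in>{2..m}. p ^ (m - j) * coeff_poly p (\<theta> j) q)"
    by (intro sum.cong refl) simp
  show ?thesis
    using cong_add[OF digit1 cong_refl[of "\<Sum>j\<in>{2..m}. p ^ (m - j) * coeff_poly p (\<theta> j) q"]]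
    unfolding theta_value_split[OF assms(2)] rest by (simp add: algebra_simps)
qed

lemma theta_expansion_twist:
  assumes "p \<ge> 2" "m \<ge> 1" "theta_expansion p m \<xi> \<theta>"
    and twist: "\<forall>q<p. \<xi>' q = unity_root p (k + l * q) * \<xi> q"
  shows "theta_expansion p m \<xi>' (twist_theta p k l \<theta>)"
proof -
  let ?\<theta>' = "twist_theta p k l \<theta>"
  have "p ^ (m - 1) * p = p ^ m" using assms(2) by (simp flip: power_Suc2)
  then have "unity_root (p ^ m) (p ^ (m - 1) * x) = unity_root p x" for x
    using unity_root_scale[of "p ^ (m - 1)" p x] assms(1) by (simp add: mult.commute)
  then have "unity_root (p ^ m) (theta_value p m ?\<theta>' q)
      = unity_root p (k + l * q) * unity_root (p ^ m) (theta_value p m \<theta> q)" for q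
    using unity_root_cong[OF _ theta_value_twist_theta[OF assms(1,2)]] assms(1)
    by (simp add: unity_root_add)
  moreover have "?\<theta>' j a < p" "(j < 1 \<or> j > m \<or> a \<ge> p) \<longrightarrow> ?\<theta>' j a = 0" for j a
    using assms(1-3) by (auto simp: twist_theta_def theta_expansion_def)
  ultimately show ?thesis
    using assms(3) twist unfolding theta_expansion_def by auto
qed

lemma theta_twist:
  assumes "prime p" "odd p" "m \<ge> 1" "theta_expansion p m \<xi> \<theta>"
    and "\<forall>q<p. \<xi>' q = unity_root p (k + l * q) * \<xi> q"
  shows "theta p m \<xi>' = twist_theta p k l \<theta>"
  using assms prime_ge_2_nat by (intro theta_eqI theta_expansion_twist) auto

lemma Pfun_twist:
  assumes "prime p" "odd p" "m \<ge> 1" "\<forall>q<p. \<xi> q ^ p ^ m = 1"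
    and "\<forall>q<p. \<xi>' q = unity_root p (k + l * q) * \<xi> q" "q < p"
  shows "Pfun p m \<xi>' q = unity_root p (k + l * q) * Pfun p m \<xi> q"
proof -
  let ?\<theta> = "theta p m \<xi>"
  have "theta p m \<xi>' = twist_theta p k l ?\<theta>"
    using theta_twist[OF assms(1-3) theta_expansion_theta[OF assms(1,2,4)] assms(5)] .
  then have "Pfun p m \<xi>' q = unity_root p ((?\<theta> 1 0 + k) mod p + (?\<theta> 1 1 + l) mod p * q)"
    using assms(6) by (simp add: Pfun_def omega_power twist_theta_def)
  also have "\<dots> = unity_root p ((k + l * q) + (?\<theta> 1 0 + ?\<theta> 1 1 * q))"
  proof (rule unity_root_cong)
    have "[(?\<theta> 1 0 + k) mod p + (?\<theta> 1 1 + l) mod p * q = (?\<theta> 1 0 + k) + (?\<theta> 1 1 + l) * q] (mod p)"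
      by (intro cong_add cong_mult) (simp_all add: cong_def)
    then show "[(?\<theta> 1 0 + k) mod p + (?\<theta> 1 1 + l) mod p * q
        = (k + l * q) + (?\<theta> 1 0 + ?\<theta> 1 1 * q)] (mod p)"
      by (simp add: algebra_simps)
  qed (use assms(1) prime_gt_0_nat in blast)
  also have "\<dots> = unity_root p (k + l * q) * Pfun p m \<xi> q"
    using assms(6) by (simp add: Pfun_def omega_power unity_root_add)
  finally show ?thesis .
qed

lemma Rfun_linear_char:
  assumes "prime p" "odd p" "m \<ge> 1" "\<forall>q<p. \<xi> q = unity_root p (k + l * q)" "q < p"
  shows "Rfun p m \<xi> q = unity_root p (k + l * q)"
proof -
  have p2: "p \<ge> 2" using assms(1) prime_ge_2_nat by blast
  have "theta_expansion p m (\<lambda>_. 1) (\<lambda>_ _. 0)"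
    using p2 by (simp add: theta_expansion_def theta_value_def coeff_poly_def)
  then have "theta p m \<xi> = twist_theta p k l (\<lambda>_ _. 0)"
    using theta_twist[OF assms(1-3)] assms(4) by simp
  moreover have "[k mod p + l mod p * q = k + l * q] (mod p)"
    by (intro cong_add cong_mult) (simp_all add: cong_def)
  then have "unity_root p (k mod p + l mod p * q) = unity_root p (k + l * q)"
    using p2 by (intro unity_root_cong) simp_all
  ultimately show ?thesis
    using assms(5) by (simp add: Rfun_def omega_power twist_theta_def)
qed

section \<open>A Heisenberg group of monomial matrices\<close>

lemma mult_carrier_mat_square [simp]:
  "A \<in> carrier_mat n n \<Longrightarrow> B \<in> carrier_mat n n \<Longrightarrow> A * B \<in> carrier_mat n n"
  by (rule mult_carrier_mat)

lemma pow_mat_add: "A \<in> carrier_mat n n \<Longrightarrow> A ^\<^sub>m (a + b) = A ^\<^sub>m a * A ^\<^sub>m b"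
proof (induction b)
  case (Suc b)
  then have "A ^\<^sub>m (a + Suc b) = A ^\<^sub>m a * A ^\<^sub>m b * A" by simp
  also have "\<dots> = A ^\<^sub>m a * (A ^\<^sub>m b * A)"
    using Suc.prems by (intro assoc_mult_mat[of _ n n _ n _ n]) auto
  finally show ?case by simp
qed simp

lemma pow_mat_mult: "A \<in> carrier_mat n n \<Longrightarrow> A ^\<^sub>m (a * b) = (A ^\<^sub>m a) ^\<^sub>m b"
proof (induction b)
  case (Suc b)
  have "A ^\<^sub>m (a * Suc b) = A ^\<^sub>m (a * b) * A ^\<^sub>m a"
    using pow_mat_add[OF Suc.prems, of "a * b" a] by (simp add: add.commute)
  then show ?case using Suc by simp
qed simp

lemma pow_mat_one: "(1\<^sub>m n :: 'a :: semiring_1 mat) ^\<^sub>m k = 1\<^sub>m n"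
  by (induction k) auto

lemma pow_mat_mod:
  assumes "A \<in> carrier_mat n n" "A ^\<^sub>m p = 1\<^sub>m n"
  shows "A ^\<^sub>m k = A ^\<^sub>m (k mod p)"
proof -
  have "A ^\<^sub>m k = (A ^\<^sub>m p) ^\<^sub>m (k div p) * A ^\<^sub>m (k mod p)"
    using assms(1) by (metis div_mult_mod_eq mult.commute pow_mat_add pow_mat_mult)
  then show ?thesis using assms by (simp add: pow_mat_one)
qed

lemma pow_mat_mult_pow_eq_one:
  assumes "A \<in> carrier_mat n n" "A ^\<^sub>m k = 1\<^sub>m n" "k dvd a + b"
  shows "A ^\<^sub>m a * A ^\<^sub>m b = 1\<^sub>m n"
proof -
  obtain t where "a + b = k * t" using assms(3) by blast
  then have "A ^\<^sub>m a * A ^\<^sub>m b = (A ^\<^sub>m k) ^\<^sub>m t"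
    using assms(1) by (simp flip: pow_mat_add pow_mat_mult)
  then show ?thesis using assms(2) by (simp add: pow_mat_one)
qed

text \<open>\<open>char_mat p k l\<close> is the diagonal matrix \<open>D\<^sub>k\<^sub>,\<^sub>l\<close> of the linear character
  \<open>q \<mapsto> \<omega>\<^sup>k\<^sup>+\<^sup>l\<^sup>q\<close>, and \<open>heis_mat p f k l j = D\<^sub>k\<^sub>,\<^sub>l N\<^sup>j\<close> with \<open>N = S\<^sub>f X\<close>. Since
  \<open>N D\<^sub>k\<^sub>,\<^sub>l = D\<^sub>k\<^sub>-\<^sub>l\<^sub>,\<^sub>l N\<close> (with \<open>-l\<close> written \<open>(p - 1) l\<close>), these matrices form a Heisenberg
  group whose multiplication law does not depend on \<open>f\<close>.\<close>

definition char_mat :: "nat \<Rightarrow> nat \<Rightarrow> nat \<Rightarrow> complex mat" where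
  "char_mat p k l = mono_mat p (\<lambda>i. unity_root p (k + l * i)) 0"

definition heis_mat :: "nat \<Rightarrow> (nat \<Rightarrow> complex) \<Rightarrow> nat \<Rightarrow> nat \<Rightarrow> nat \<Rightarrow> complex mat" where
  "heis_mat p f k l j = char_mat p k l * mono_mat p f 1 ^\<^sub>m j"

lemma char_mat_carrier [simp]: "char_mat p k l \<in> carrier_mat p p"
  by (simp add: char_mat_def)

lemma heis_mat_carrier [simp]: "heis_mat p f k l j \<in> carrier_mat p p"
  by (simp add: heis_mat_def)

lemma heis_mat_dim [simp]: "dim_row (heis_mat p f k l j) = p" "dim_col (heis_mat p f k l j) = p"
  by (simp_all add: heis_mat_def char_mat_def)

lemma char_mat_mult: "p > 0 \<Longrightarrow> char_mat p k l * char_mat p k' l' = char_mat p (k + k') (l + l')"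
  unfolding char_mat_def mono_mat_mult
  by (rule mono_mat_cong) (simp_all add: shift_back_0 algebra_simps flip: unity_root_add)

lemma char_mat_0: "p > 0 \<Longrightarrow> char_mat p 0 0 = 1\<^sub>m p"
  unfolding char_mat_def one_eq_mono_mat by (rule mono_mat_cong) simp_all

lemma char_mat_cong:
  assumes "p > 0" "[k = k'] (mod p)" "[l = l'] (mod p)"
  shows "char_mat p k l = char_mat p k' l'"
  unfolding char_mat_def using assms
  by (intro mono_mat_cong) (auto intro!: unity_root_cong cong_add cong_mult)

lemma diag_in_T_char:
  assumes "odd p" "m \<ge> 1" shows "diag_in_T p m (\<lambda>i. unity_root p (k + l * i))"
  using assms prod_unity_root_linear[OF assms(1)]
  by (simp add: diag_in_T_def unity_root_power_eq_1)

lemma shift_back_1_cong: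
  assumes "p > 0" shows "[l * shift_back p 1 i = (p - 1) * l + l * i] (mod p)"
proof -
  have "[int l * int (shift_back p 1 i) = int l * (int i - 1)] (mod int p)"
    using assms by (simp add: int_shift_back cong_def mod_mult_right_eq)
  also have "int l * (int i - 1) = int (p - 1) * int l + int l * int i - int p * int l"
    using assms by (simp add: of_nat_diff algebra_simps)
  also have "\<dots> = int ((p - 1) * l + l * i) - int p * int l"
    by (simp only: of_nat_add of_nat_mult)
  also have "[\<dots> = int ((p - 1) * l + l * i)] (mod int p)"
    by (simp add: cong_iff_dvd_diff)
  finally have "[int (l * shift_back p 1 i) = int ((p - 1) * l + l * i)] (mod int p)"
    by simp
  then show ?thesis by (simp only: cong_int_iff)
qed

lemma mono_mat_shift_char_mat:
  assumes "p > 0"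
  shows "mono_mat p f 1 * char_mat p k l = char_mat p (k + (p - 1) * l) l * mono_mat p f 1"
  unfolding char_mat_def mono_mat_mult[OF assms]
proof (rule mono_mat_cong)
  fix i assume "i < p"
  moreover have "[k + l * shift_back p 1 i = k + (p - 1) * l + l * i] (mod p)"
    using cong_add[OF cong_refl shift_back_1_cong[OF assms]] by (simp add: add.assoc)
  ultimately show "f i * unity_root p (k + l * shift_back p 1 i)
      = unity_root p (k + (p - 1) * l + l * i) * f (shift_back p 0 i)"
    using assms by (simp add: shift_back_0 unity_root_cong)
qed simp

lemma mono_mat_power_shift_char_mat:
  assumes "p > 0"
  shows "mono_mat p f 1 ^\<^sub>m j * char_mat p k l = char_mat p (k + (p - 1) * l * j) l * mono_mat p f 1 ^\<^sub>m j"
proof (induction j arbitrary: k)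
  case (Suc j)
  let ?N = "mono_mat p f 1"
  have "?N ^\<^sub>m Suc j * char_mat p k l = ?N ^\<^sub>m j * (?N * char_mat p k l)"
    by (simp add: assoc_mult_mat[of _ p p _ p _ p])
  also have "\<dots> = (?N ^\<^sub>m j * char_mat p (k + (p - 1) * l) l) * ?N"
    by (simp add: mono_mat_shift_char_mat[OF assms] assoc_mult_mat[of _ p p _ p _ p])
  also have "\<dots> = char_mat p (k + (p - 1) * l * Suc j) l * ?N ^\<^sub>m Suc j"
    by (simp add: Suc assoc_mult_mat[of _ p p _ p _ p] add.assoc)
  finally show ?case .
next
  case 0
  show ?case
    using left_mult_one_mat[OF char_mat_carrier] right_mult_one_mat[OF char_mat_carrier] by simp
qed

lemma heis_mat_mult:
  assumes "p > 0"
  shows "heis_mat p f k l j * heis_mat p f k' l' j'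
    = heis_mat p f (k + k' + (p - 1) * l' * j) (l + l') (j + j')"
proof -
  let ?N = "mono_mat p f 1"
  have "heis_mat p f k l j * heis_mat p f k' l' j'
      = char_mat p k l * ((?N ^\<^sub>m j * char_mat p k' l') * ?N ^\<^sub>m j')"
    unfolding heis_mat_def by (simp add: assoc_mult_mat[of _ p p _ p _ p])
  also have "\<dots> = (char_mat p k l * char_mat p (k' + (p - 1) * l' * j) l') * (?N ^\<^sub>m j * ?N ^\<^sub>m j')"
    by (simp add: mono_mat_power_shift_char_mat[OF assms] assoc_mult_mat[of _ p p _ p _ p])
  also have "\<dots> = heis_mat p f (k + k' + (p - 1) * l' * j) (l + l') (j + j')"
    unfolding heis_mat_def char_mat_mult[OF assms] pow_mat_add[OF mono_mat_carrier]
    by (simp add: add.assoc)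
  finally show ?thesis .
qed

lemma heis_mat_0: "p > 0 \<Longrightarrow> heis_mat p f 0 0 0 = 1\<^sub>m p"
  by (simp add: heis_mat_def char_mat_0)

lemma heis_mat_power:
  assumes "p > 0"
  shows "heis_mat p f k l j ^\<^sub>m t = heis_mat p f (t * k + (p - 1) * l * j * (\<Sum>s<t. s)) (l * t) (j * t)"
proof (induction t)
  case (Suc t)
  have ring: "t * k + r * l * j * (\<Sum>s<t. s) + k + r * l * (j * t)
      = Suc t * k + r * l * j * (\<Sum>s<Suc t. s)" for r :: nat
    by (simp add: algebra_simps)
  have "heis_mat p f k l j ^\<^sub>m Suc t
      = heis_mat p f (t * k + (p - 1) * l * j * (\<Sum>s<t. s)) (l * t) (j * t) * heis_mat p f k l j"
    using Suc by simp
  also have "\<dots> = heis_mat p f (Suc t * k + (p - 1) * l * j * (\<Sum>s<Suc t. s)) (l * t + l) (j * t + j)"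
    unfolding heis_mat_mult[OF assms] ring ..
  finally show ?case by (simp add: add.commute)
qed (simp add: heis_mat_0[OF assms])

lemma heis_mat_cong:
  assumes "p > 0" "mono_mat p f 1 ^\<^sub>m p = 1\<^sub>m p"
    and "[k = k'] (mod p)" "[l = l'] (mod p)" "[j = j'] (mod p)"
  shows "heis_mat p f k l j = heis_mat p f k' l' j'"
proof -
  have "mono_mat p f 1 ^\<^sub>m j = mono_mat p f 1 ^\<^sub>m j'"
    using pow_mat_mod[OF mono_mat_carrier assms(2)] assms(5) unfolding cong_def by metis
  then show ?thesis
    unfolding heis_mat_def using char_mat_cong[OF assms(1,3,4)] by simp
qed

lemma heis_mat_eq_char_mat:
  assumes "p > 0" "mono_mat p f 1 ^\<^sub>m p = 1\<^sub>m p" "[j = 0] (mod p)"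
  shows "heis_mat p f k l j = char_mat p k l"
proof -
  have "heis_mat p f k l j = heis_mat p f k l 0"
    by (rule heis_mat_cong[OF assms(1,2) cong_refl cong_refl assms(3)])
  then show ?thesis using right_mult_one_mat[OF char_mat_carrier] by (simp add: heis_mat_def)
qed

lemma heis_mat_power_prime:
  assumes "odd p" "p > 0" "mono_mat p f 1 ^\<^sub>m p = 1\<^sub>m p"
  shows "heis_mat p f k l j ^\<^sub>m p = 1\<^sub>m p"
proof -
  have "heis_mat p f k l j ^\<^sub>m p = heis_mat p f (p * k + (p - 1) * l * j * (\<Sum>s<p. s)) (l * p) (j * p)"
    by (rule heis_mat_power[OF assms(2)])
  also have "\<dots> = heis_mat p f 0 0 0"
    using odd_dvd_sum_lessThan[OF assms(1)]
    by (intro heis_mat_cong[OF assms(2,3)]) (simp_all add: cong_0_iff)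
  finally show ?thesis by (simp add: heis_mat_0[OF assms(2)])
qed

lemma heis_mat_eq_mono_mat:
  assumes "prime p" "odd p" "m \<ge> 1" "diag_in_T p m g"
  obtains h where "diag_in_T p m h" "heis_mat p g k l j = mono_mat p h (int j)"
proof -
  have p0: "p > 0" using assms(1) prime_gt_0_nat by blast
  obtain g' where g': "diag_in_T p m g'" "mono_mat p g 1 ^\<^sub>m j = mono_mat p g' (int j * 1)"
    using mono_mat_power_diag_in_T[OF assms(1,4)] by blast
  have "heis_mat p g k l j = mono_mat p (\<lambda>i. unity_root p (k + l * i) * g' (shift_back p 0 i)) (int j)"
    unfolding heis_mat_def char_mat_def g'(2) mono_mat_mult[OF p0] by simp
  moreover have "diag_in_T p m (\<lambda>i. unity_root p (k + l * i) * g' (shift_back p 0 i))"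
    by (rule diag_in_T_mult_shift[OF assms(1) diag_in_T_char[OF assms(2,3)] g'(1)])
  ultimately show ?thesis using that by blast
qed

section \<open>\<open>\<phi>\<^sub>1\<close> on the Heisenberg group\<close>

lemma coprime_less_prime:
  fixes p b :: nat
  assumes "prime p" "0 < b" "b < p" shows "coprime b p"
proof -
  have "\<not> p dvd b" using nat_dvd_not_less[OF assms(2,3)] .
  then show ?thesis using prime_imp_coprime_nat[OF assms(1)] by (simp add: coprime_commute)
qed

lemma mod_inverse_exists:
  fixes p b :: nat
  assumes "prime p" "0 < b" "b < p"
  obtains y where "y \<in> {1..p-1}" "[y * b = 1] (mod p)"
proof -
  have "coprime b p"
    using coprime_less_prime[OF assms(1)] assms by blast
  then obtain y0 where "[b * y0 = 1] (mod p)" using cong_solve_coprime_nat by auto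
  moreover have "[y0 mod p * b = y0 * b] (mod p)"
    by (intro cong_mult) (simp_all add: cong_def)
  ultimately have y: "[y0 mod p * b = 1] (mod p)"
    by (metis cong_trans mult.commute)
  moreover have "y0 mod p \<noteq> 0"
  proof
    assume "y0 mod p = 0"
    with y have "[0 = 1] (mod p)" by simp
    then show False using prime_gt_1_nat[OF assms(1)] by (simp add: cong_def)
  qed
  moreover have "y0 mod p < p" using assms(1) prime_gt_0_nat by simp
  ultimately show ?thesis using that[of "y0 mod p"] by simp
qed

lemma phi1_eq_phi_base_power:
  assumes "prime p" "dec_b p m M = b" "0 < b" "b < p" "y \<in> {1..p-1}" "[y * b = 1] (mod p)"
  shows "phi1 p m M = phi_base p m (M ^\<^sub>m y) ^\<^sub>m b"
proof -
  have "coprime b p"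
    using coprime_less_prime[OF assms(1)] assms by blast
  have "y' = y" if "y' \<in> {1..p-1}" "[y' * b = 1] (mod p)" for y'
  proof -
    have "[y' * b = y * b] (mod p)" using that(2) assms(6) by (meson cong_sym cong_trans)
    then have "[y' = y] (mod p)" using cong_mult_rcancel_nat[OF \<open>coprime b p\<close>] by blast
    moreover have "y' < p" "y < p" using that(1) assms(5) prime_gt_0_nat[OF assms(1)] by auto
    ultimately show ?thesis by (rule cong_less_modulus_unique_nat)
  qed
  then have "(THE y. y \<in> {1..p-1} \<and> [y * b = 1] (mod p)) = y"
    using assms(5,6) by blast
  moreover have "y = 1" if "b = 1"
    using assms(1,5,6) that prime_gt_1_nat cong_less_modulus_unique_nat[of y 1 p] by auto
  ultimately show ?thesis
    unfolding phi1_def Let_def using assms(2,3) by (cases "b = 1") simp_all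
qed

lemma phi1_char_mat:
  assumes "prime p" "odd p" "m \<ge> 1"
  shows "phi1 p m (char_mat p k l) = char_mat p k l"
proof -
  have p0: "p > 0" using assms(1) prime_gt_0_nat by blast
  let ?\<chi> = "\<lambda>i. unity_root p (k + l * i)"
  have "phi1 p m (char_mat p k l) = Smat p (Rfun p m (pad_one p ?\<chi>))"
    unfolding phi1_def phi_base_def char_mat_def Let_def
    using dec_b_mono_mat[OF p0 diag_in_T_char[OF assms(2,3)]]
      dec_xi_mono_mat[OF p0 diag_in_T_char[OF assms(2,3)]] by simp
  also have "\<dots> = char_mat p k l"
    unfolding Smat_eq_mono_mat char_mat_def using Rfun_linear_char[OF assms, of "pad_one p ?\<chi>"]
    by (intro mono_mat_cong) (simp_all add: pad_one_def)
  finally show ?thesis .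
qed

lemma phi_base_heis_mat_1:
  assumes "prime p" "odd p" "m \<ge> 1" "diag_in_T p m g"
  shows "phi_base p m (heis_mat p g k l 1) = heis_mat p (Pfun p m (pad_one p g)) k l 1"
proof -
  have p0: "p > 0" using assms(1) prime_gt_0_nat by blast
  define h where "h i = unity_root p (k + l * i) * g i" for i
  have heis: "heis_mat p f k l 1 = mono_mat p (\<lambda>i. unity_root p (k + l * i) * f i) 1" for f
    unfolding heis_mat_def char_mat_def
    by (simp add: mono_mat_mult[OF p0]) (rule mono_mat_cong, simp_all add: shift_back_0)
  have "diag_in_T p m h"
    using diag_in_T_mult_shift[OF assms(1) diag_in_T_char[OF assms(2,3)] assms(4), of k l 0]
    by (simp add: h_def shift_back_0 diag_in_T_def)
  moreover have "1 mod int p = 1" using prime_gt_1_nat[OF assms(1)] by simp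
  ultimately have "phi_base p m (heis_mat p g k l 1) = Smat p (Pfun p m (pad_one p h)) * Xmat p"
    unfolding phi_base_def heis h_def[symmetric] using p0
    by (simp add: dec_b_mono_mat dec_xi_mono_mat)
  also have "\<dots> = heis_mat p (Pfun p m (pad_one p g)) k l 1"
    unfolding heis Smat_mult_Xmat_power[OF p0, of _ 1, simplified]
  proof (rule mono_mat_cong)
    fix i assume "i < p"
    then show "Pfun p m (pad_one p h) i = unity_root p (k + l * i) * Pfun p m (pad_one p g) i"
      using assms(4) by (intro Pfun_twist[OF assms(1-3)]) (simp_all add: diag_in_T_def pad_one_def h_def)
  qed simp
  finally show ?thesis .
qed

lemma prod_Pfun: "odd p \<Longrightarrow> (\<Prod>q<p. Pfun p m \<xi> q) = 1"
  using prod_unity_root_linear[of p "theta p m \<xi> 1 0" "theta p m \<xi> 1 1"]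
  by (simp add: Pfun_def omega_power)

lemma phi1_heis_mat_nonzero:
  assumes "prime p" "odd p" "m \<ge> 1" "diag_in_T p m g" "j mod p \<noteq> 0"
  shows "phi1 p m (heis_mat p g k l j) = heis_mat p (Pfun p m (pad_one p g)) k l j"
proof -
  have p0: "p > 0" using assms(1) prime_gt_0_nat by blast
  define P where "P = Pfun p m (pad_one p g)"
  have g_p: "mono_mat p g 1 ^\<^sub>m p = 1\<^sub>m p" and P_p: "mono_mat p P 1 ^\<^sub>m p = 1\<^sub>m p"
    using mono_mat_shift_power_prime[OF assms(1)] assms(4) prod_Pfun[OF assms(2)]
    by (auto simp: diag_in_T_def P_def)
  define b where "b = j mod p"
  have b: "0 < b" "b < p" using assms(5) p0 by (auto simp: b_def)
  obtain h where "diag_in_T p m h" "heis_mat p g k l j = mono_mat p h (int j)"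
    using heis_mat_eq_mono_mat[OF assms(1-4)] .
  then have dec_b: "dec_b p m (heis_mat p g k l j) = b"
    using p0 by (simp add: dec_b_mono_mat b_def nat_mod_as_int)
  obtain y where y: "y \<in> {1..p-1}" "[y * b = 1] (mod p)"
    using mod_inverse_exists[OF assms(1) b] .
  have jy: "[j * y = 1] (mod p)"
    using y(2) by (metis b_def cong_def mod_mult_left_eq mult.commute)
  define K where "K = y * k + (p - 1) * l * j * (\<Sum>s<y. s)"
  have "phi1 p m (heis_mat p g k l j) = phi_base p m (heis_mat p g k l j ^\<^sub>m y) ^\<^sub>m b"
    by (rule phi1_eq_phi_base_power[OF assms(1) dec_b b y])
  also have "heis_mat p g k l j ^\<^sub>m y = heis_mat p g K (l * y) 1"
    unfolding heis_mat_power[OF p0] K_def by (rule heis_mat_cong[OF p0 g_p cong_refl cong_refl jy])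
  also have "phi_base p m \<dots> = heis_mat p P K (l * y) 1"
    unfolding P_def by (rule phi_base_heis_mat_1[OF assms(1-4)])
  also have "\<dots> = heis_mat p P k l j ^\<^sub>m y"
    unfolding heis_mat_power[OF p0] K_def by (rule heis_mat_cong[OF p0 P_p cong_refl cong_refl cong_sym[OF jy]])
  also have "(heis_mat p P k l j ^\<^sub>m y) ^\<^sub>m b = heis_mat p P k l j ^\<^sub>m (y * b)"
    by (rule pow_mat_mult[OF heis_mat_carrier, symmetric])
  also have "\<dots> = heis_mat p P k l j ^\<^sub>m ((y * b) mod p)"
    by (rule pow_mat_mod[OF heis_mat_carrier heis_mat_power_prime[OF assms(2) p0 P_p]])
  also have "(y * b) mod p = 1"
    using y(2) prime_gt_1_nat[OF assms(1)] by (simp add: cong_def)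
  finally show ?thesis by (simp add: P_def)
qed

lemma phi1_heis_mat:
  assumes "prime p" "odd p" "m \<ge> 1" "diag_in_T p m g"
  shows "phi1 p m (heis_mat p g k l j) = heis_mat p (Pfun p m (pad_one p g)) k l j"
proof (cases "j mod p = 0")
  case True
  have p0: "p > 0" using assms(1) prime_gt_0_nat by blast
  have "mono_mat p g 1 ^\<^sub>m p = 1\<^sub>m p" "mono_mat p (Pfun p m (pad_one p g)) 1 ^\<^sub>m p = 1\<^sub>m p"
    using mono_mat_shift_power_prime[OF assms(1)] assms(4) prod_Pfun[OF assms(2)]
    by (auto simp: diag_in_T_def)
  moreover have "[j = 0] (mod p)" using True by (simp add: cong_def)
  ultimately show ?thesis
    using heis_mat_eq_char_mat[OF p0] phi1_char_mat[OF assms(1-3)] by simp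
qed (rule phi1_heis_mat_nonzero[OF assms])

section \<open>Elements of \<open>K\<close> commuting up to a scalar\<close>

lemma Kset_eq_heis_mat:
  assumes "prime p" "M \<in> Kset p m" "dec_b p m M \<noteq> 0"
  obtains g where "diag_in_T p m g" "M = heis_mat p g 0 0 (dec_b p m M)"
proof -
  have p0: "p > 0" using assms(1) prime_gt_0_nat by blast
  define b where "b = dec_b p m M"
  obtain f where f: "diag_in_T p m f" and M: "M = mono_mat p f (int b)" and "b < p"
    using Kset_mono_mat_dec_b[OF p0 assms(2)] unfolding b_def .
  moreover have "0 < b" using assms(3) by (simp add: b_def)
  ultimately obtain y where y: "y \<in> {1..p-1}" "[y * b = 1] (mod p)"
    using mod_inverse_exists[OF assms(1)] by blast
  obtain g where g: "diag_in_T p m g" "M ^\<^sub>m y = mono_mat p g (int y * int b)"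
    using mono_mat_power_diag_in_T[OF assms(1) f] M by blast
  have "M ^\<^sub>m y = mono_mat p g 1"
    unfolding g(2) using y(2) by (intro mono_mat_cong) (simp_all flip: cong_int_iff)
  then have "mono_mat p g 1 ^\<^sub>m b = M ^\<^sub>m ((y * b) mod p)"
    using M pow_mat_mult[OF mono_mat_carrier] pow_mat_mod[OF mono_mat_carrier] 
      Kset_power_prime[OF assms] by metis
  also have "(y * b) mod p = 1"
    using y(2) prime_gt_1_nat[OF assms(1)] by (simp add: cong_def)
  finally have "M = heis_mat p g 0 0 b"
    using M by (simp add: heis_mat_def char_mat_0[OF p0] left_mult_one_mat[of _ p p])
  with g(1) show ?thesis unfolding b_def by (rule that)
qed

lemma minv_eqI:
  assumes "A \<in> carrier_mat n n" "B \<in> carrier_mat n n" "A * B = 1\<^sub>m n" "B * A = 1\<^sub>m n"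
  shows "minv A = B"
  unfolding minv_def
proof (rule the_equality)
  show "inverts_mat A B \<and> inverts_mat B A" using assms by (simp add: inverts_mat_def)
next
  fix B' assume "inverts_mat A B' \<and> inverts_mat B' A"
  then have AB': "A * B' = 1\<^sub>m n" and B'A: "B' * A = 1\<^sub>m (dim_row B')"
    using assms(1) by (auto simp: inverts_mat_def)
  have "dim_col B' = n" "dim_row B' = n"
    using arg_cong[OF AB', of dim_col] arg_cong[OF B'A, of dim_col] assms(1) by auto
  then have B': "B' \<in> carrier_mat n n" by auto
  have "B' = B' * (A * B)" using assms(3) B' by simp
  also have "\<dots> = (B' * A) * B" using assms(1,2) B' by (simp add: assoc_mult_mat[of _ n n _ n _ n])
  finally show "B' = B" using B'A \<open>dim_row B' = n\<close> assms(2) by simp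
qed

lemma commutator_eq_imp_mult_eq:
  assumes "A \<in> carrier_mat n n" "B \<in> carrier_mat n n" "A ^\<^sub>m k = 1\<^sub>m n" "B ^\<^sub>m k = 1\<^sub>m n" "k > 0"
    and "commutator A B = S"
  shows "A * B = S * (B * A)"
proof -
  have inverse: "X * X ^\<^sub>m (k - 1) = 1\<^sub>m n" "X ^\<^sub>m (k - 1) * X = 1\<^sub>m n"
    if "X \<in> carrier_mat n n" "X ^\<^sub>m k = 1\<^sub>m n" for X
    using pow_mat_mult_pow_eq_one[OF that, of 1 "k - 1"] pow_mat_mult_pow_eq_one[OF that, of "k - 1" 1]
      that(1) assms(5) by simp_all
  have "minv A = A ^\<^sub>m (k - 1)" "minv B = B ^\<^sub>m (k - 1)"
    by (rule minv_eqI[OF assms(1) pow_carrier_mat[OF assms(1)] inverse[OF assms(1,3)]],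
        rule minv_eqI[OF assms(2) pow_carrier_mat[OF assms(2)] inverse[OF assms(2,4)]])
  then have "S = A * B * A ^\<^sub>m (k - 1) * B ^\<^sub>m (k - 1)"
    using assms(6) by (simp add: commutator_def)
  then have "S * (B * A) = A * (B * (A ^\<^sub>m (k - 1) * ((B ^\<^sub>m (k - 1) * B) * A)))"
    using assms(1,2) by (simp add: assoc_mult_mat[of _ n n _ n _ n])
  also have "B ^\<^sub>m (k - 1) * B = 1\<^sub>m n" by (rule inverse(2)[OF assms(2,4)])
  also have "A ^\<^sub>m (k - 1) * (1\<^sub>m n * A) = 1\<^sub>m n"
    using inverse(2)[OF assms(1,3)] assms(1) by simp
  finally show ?thesis using assms(2) by simp
qed

lemma mult_right_cancel_mat:
  fixes A B C D :: "'a :: semiring_1 mat"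
  assumes "A \<in> carrier_mat n n" "B \<in> carrier_mat n n" "C \<in> carrier_mat n n" "D \<in> carrier_mat n n"
    and "C * D = 1\<^sub>m n" "A * C = B * C"
  shows "A = B"
proof -
  have "A = (A * C) * D"
    using assms(1,3,4,5) by (simp add: assoc_mult_mat[of _ n n _ n _ n] right_mult_one_mat[OF assms(1)])
  also have "\<dots> = B"
    using assms(2-6) by (simp add: assoc_mult_mat[of _ n n _ n _ n] right_mult_one_mat[OF assms(2)])
  finally show ?thesis .
qed

text \<open>A diagonal \<open>\<zeta>\<close> with \<open>\<zeta>(i - b) = \<omega>\<^sup>c \<zeta>(i)\<close> is geometric along the multiples of \<open>b\<close>, which
  exhaust \<open>\<int>\<^sub>p\<close>; the condition \<open>\<Prod>\<zeta> = 1\<close> makes \<open>\<zeta>(0)\<close> a \<open>p\<close>-th root of unity.\<close>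

lemma shift_covariant_geometric:
  assumes "p > 0" "\<And>i. i < p \<Longrightarrow> \<zeta> (shift_back p (int b) i) = unity_root p c * \<zeta> i"
  shows "unity_root p (c * t) * \<zeta> ((t * b) mod p) = \<zeta> 0"
proof (induction t)
  case (Suc t)
  have "int ((t * b) mod p) = (int ((Suc t * b) mod p) - int b) mod int p"
    by (simp add: zmod_int mod_diff_left_eq algebra_simps)
  then have "shift_back p (int b) ((Suc t * b) mod p) = (t * b) mod p"
    using assms(1) by (simp add: shift_back_def)
  then have "\<zeta> ((t * b) mod p) = unity_root p c * \<zeta> ((Suc t * b) mod p)"
    using assms(2)[of "(Suc t * b) mod p"] assms(1) by simp
  with Suc show ?case by (simp add: unity_root_add mult_ac)
qed simp

lemma shift_covariant_is_linear_char:
  assumes "prime p" "odd p" "0 < b" "b < p" "(\<Prod>i<p. \<zeta> i) = 1"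
    and shift: "\<And>i. i < p \<Longrightarrow> \<zeta> (shift_back p (int b) i) = unity_root p c * \<zeta> i"
  obtains k l where "\<And>i. i < p \<Longrightarrow> \<zeta> i = unity_root p (k + l * i)"
proof -
  have p0: "p > 0" using assms(1) prime_gt_0_nat by blast
  note geometric = shift_covariant_geometric[where \<zeta> = \<zeta> and b = b and c = c, OF p0 shift]
  obtain y where y: "y \<in> {1..p-1}" "[y * b = 1] (mod p)"
    using mod_inverse_exists[OF assms(1,3,4)] .
  define l where "l = (p - 1) * c * y"
  have linear: "\<zeta> i = unity_root p (l * i) * \<zeta> 0" if "i < p" for i
  proof -
    have "[i * (y * b) = i * 1] (mod p)" using y(2) by (rule cong_scalar_left)
    then have "(i * y * b) mod p = i" using that by (simp add: cong_def mult.assoc)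
    then have "unity_root p (c * (i * y)) * \<zeta> i = \<zeta> 0"
      using geometric[of "i * y"] by simp
    moreover have "l * i + c * (i * y) = p * (c * y * i)"
      using p0 by (cases p) (simp_all add: l_def algebra_simps)
    then have "unity_root p (l * i) * unity_root p (c * (i * y)) = 1"
      by (simp add: unity_root_dvd_eq_1 flip: unity_root_add)
    ultimately show ?thesis by (metis mult.assoc mult_1)
  qed
  have "\<zeta> 0 ^ p = 1"
  proof -
    have "(\<Prod>i<p. \<zeta> i) = (\<Prod>i<p. unity_root p (0 + l * i) * \<zeta> 0)"
      using linear by (intro prod.cong refl) (metis add_0 lessThan_iff)
    then have "(\<Prod>i<p. \<zeta> i) = (\<Prod>i<p. unity_root p (0 + l * i)) * \<zeta> 0 ^ p"
      by (simp add: prod.distrib)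
    then show ?thesis using assms(5) prod_unity_root_linear[OF assms(2), of 0 l] by simp
  qed
  then obtain k where "\<zeta> 0 = unity_root p k"
    using root_of_unity_eq_unity_root[OF p0] by blast
  then have "\<zeta> i = unity_root p (k + l * i)" if "i < p" for i
    using linear[OF that] by (simp add: unity_root_add mult.commute)
  then show ?thesis using that by blast
qed

lemma mono_mat_diag_commute_scalar:
  assumes "p > 0" "\<And>i. i < p \<Longrightarrow> u i \<noteq> 0" "\<And>i. i < p \<Longrightarrow> \<zeta> i \<noteq> 0"
    and "mono_mat p u b * mono_mat p \<zeta> 0 = (a \<cdot>\<^sub>m 1\<^sub>m p) * mono_mat p \<zeta> 0 * mono_mat p u b"
    and "i < p"
  shows "\<zeta> (shift_back p b i) = a * \<zeta> i"
proof -
  have "mono_mat p (\<lambda>i. u i * \<zeta> (shift_back p b i)) b = mono_mat p (\<lambda>i. a * \<zeta> i * u i) b"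
    using assms(4) unfolding smult_one_eq_mono_mat mono_mat_mult[OF assms(1)]
    by (simp add: mono_mat_cong shift_back_0)
  moreover have "u i * \<zeta> (shift_back p b i) \<noteq> 0" if "i < p" for i
    using assms(2,3) shift_back_less[OF assms(1)] that by simp
  ultimately have "a * \<zeta> i * u i = u i * \<zeta> (shift_back p b i)"
    using mono_mat_eq_imp(2)[where f = "\<lambda>i. u i * \<zeta> (shift_back p b i)"] assms(1,5) by blast
  then show ?thesis using assms(2)[OF assms(5)] by (simp add: mult.commute)
qed

lemma pow_mat_commute_cancel:
  assumes "N \<in> carrier_mat n n" "Z \<in> carrier_mat n n" "S \<in> carrier_mat n n" "N ^\<^sub>m k = 1\<^sub>m n" "k > 0"
    and "N ^\<^sub>m b * (Z * N ^\<^sub>m c) = S * ((Z * N ^\<^sub>m c) * N ^\<^sub>m b)"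
  shows "N ^\<^sub>m b * Z = S * Z * N ^\<^sub>m b"
proof -
  have "N ^\<^sub>m c * N ^\<^sub>m b = N ^\<^sub>m b * N ^\<^sub>m c"
    using pow_mat_add[OF assms(1)] by (metis add.commute)
  then have eq: "(N ^\<^sub>m b * Z) * N ^\<^sub>m c = (S * Z * N ^\<^sub>m b) * N ^\<^sub>m c"
    using assms(1-3,6) by (simp add: assoc_mult_mat[of _ n n _ n _ n])
  have "c + (k - 1) * c = k * c" using assms(5) by (cases k) simp_all
  then have "k dvd c + (k - 1) * c" by simp
  with assms(4) have inv: "N ^\<^sub>m c * N ^\<^sub>m ((k - 1) * c) = 1\<^sub>m n"
    by (rule pow_mat_mult_pow_eq_one[OF assms(1)])
  show ?thesis
    by (rule mult_right_cancel_mat[OF _ _ pow_carrier_mat[OF assms(1)] pow_carrier_mat[OF assms(1)] inv eq])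
      (simp_all add: assms(1-3))
qed

lemma commute_up_to_scalar_eq_heis_mat:
  assumes "prime p" "odd p" "m \<ge> 1" "diag_in_T p m g" "0 < b" "b < p" "diag_in_T p m \<zeta>"
    and comm: "heis_mat p g 0 0 b * (mono_mat p \<zeta> 0 * mono_mat p g 1 ^\<^sub>m b')
      = (omega p ^ c \<cdot>\<^sub>m 1\<^sub>m p) * ((mono_mat p \<zeta> 0 * mono_mat p g 1 ^\<^sub>m b') * heis_mat p g 0 0 b)"
  obtains k l where "mono_mat p \<zeta> 0 * mono_mat p g 1 ^\<^sub>m b' = heis_mat p g k l b'"
proof -
  have p0: "p > 0" using assms(1) prime_gt_0_nat by blast
  define N where "N = mono_mat p g 1"
  define Z where "Z = mono_mat p \<zeta> 0"
  define S where "S = omega p ^ c \<cdot>\<^sub>m 1\<^sub>m p"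
  have carrier: "N \<in> carrier_mat p p" "Z \<in> carrier_mat p p" "S \<in> carrier_mat p p"
    by (simp_all add: N_def Z_def S_def)
  have M: "heis_mat p g 0 0 b = N ^\<^sub>m b"
    using carrier(1) by (simp add: heis_mat_def char_mat_0[OF p0] N_def)
  have "N ^\<^sub>m p = 1\<^sub>m p"
    using mono_mat_shift_power_prime[OF assms(1)] assms(4) by (simp add: N_def diag_in_T_def)
  then have "N ^\<^sub>m b * Z = S * Z * N ^\<^sub>m b"
    using comm unfolding M N_def[symmetric] Z_def[symmetric] S_def[symmetric]
    by (rule pow_mat_commute_cancel[OF carrier _ p0])
  moreover obtain u where u: "diag_in_T p m u" "N ^\<^sub>m b = mono_mat p u (int b * 1)"
    using mono_mat_power_diag_in_T[OF assms(1,4)] unfolding N_def by blast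
  ultimately have "mono_mat p u (int b) * mono_mat p \<zeta> 0
      = (unity_root p c \<cdot>\<^sub>m 1\<^sub>m p) * mono_mat p \<zeta> 0 * mono_mat p u (int b)"
    by (simp add: Z_def S_def omega_power)
  then have "\<zeta> (shift_back p (int b) i) = unity_root p c * \<zeta> i" if "i < p" for i
    using mono_mat_diag_commute_scalar[of p u \<zeta> "int b" "unity_root p c" i] p0 that
      diag_in_T_nonzero[OF u(1)] diag_in_T_nonzero[OF assms(7)] by blast
  moreover have "(\<Prod>i<p. \<zeta> i) = 1" using assms(7) by (simp add: diag_in_T_def)
  ultimately obtain k l where "\<And>i. i < p \<Longrightarrow> \<zeta> i = unity_root p (k + l * i)"
    using shift_covariant_is_linear_char[OF assms(1,2,5,6)] by metis
  then have "Z = char_mat p k l"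
    unfolding Z_def char_mat_def by (intro mono_mat_cong) simp_all
  then have "mono_mat p \<zeta> 0 * mono_mat p g 1 ^\<^sub>m b' = heis_mat p g k l b'"
    by (simp add: heis_mat_def Z_def)
  then show ?thesis by (rule that)
qed

theorem lemma7:
  fixes p m c :: nat and M M' :: "complex mat"
  assumes "prime p" and "odd p" and "m \<ge> 1"
    and "M \<in> Kset p m" and "M' \<in> Kset p m"
    and "dec_b p m M \<noteq> 0" and "dec_b p m M' \<noteq> 0"
    and "c < p"
    and "commutator M M' = omega p ^ c \<cdot>\<^sub>m 1\<^sub>m p"
  shows "phi1 p m (M * M') = phi1 p m M * phi1 p m M'"
proof -
  have p0: "p > 0" using assms(1) prime_gt_0_nat by blast
  define b b' where "b = dec_b p m M" and "b' = dec_b p m M'"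
  have b: "0 < b" "b < p"
    using assms(6) Kset_mono_mat_dec_b[OF p0 assms(4)] by (auto simp: b_def)
  obtain g where g: "diag_in_T p m g" and M: "M = heis_mat p g 0 0 b"
    using Kset_eq_heis_mat[OF assms(1,4,6)] unfolding b_def .
  obtain f' where "diag_in_T p m f'" "M' = mono_mat p f' (int b')"
    using Kset_mono_mat_dec_b[OF p0 assms(5)] unfolding b'_def .
  then obtain \<zeta> where \<zeta>: "diag_in_T p m \<zeta>" "M' = mono_mat p \<zeta> 0 * mono_mat p g 1 ^\<^sub>m b'"
    using mono_mat_factor_power[OF assms(1) _ g] by metis
  have "M * M' = (omega p ^ c \<cdot>\<^sub>m 1\<^sub>m p) * (M' * M)"
    using Kset_power_prime[OF assms(1,4,6)] Kset_power_prime[OF assms(1,5,7)] p0 assms(9)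
    by (intro commutator_eq_imp_mult_eq) (simp_all add: M \<zeta>(2))
  then obtain k l where M': "M' = heis_mat p g k l b'"
    using commute_up_to_scalar_eq_heis_mat[OF assms(1-3) g b \<zeta>(1)] unfolding M \<zeta>(2) by metis
  let ?P = "Pfun p m (pad_one p g)"
  have "phi1 p m (M * M') = heis_mat p ?P (0 + k + (p - 1) * l * b) (0 + l) (b + b')"
    unfolding M M' heis_mat_mult[OF p0] by (rule phi1_heis_mat[OF assms(1-3) g])
  also have "\<dots> = phi1 p m M * phi1 p m M'"
    unfolding M M' phi1_heis_mat[OF assms(1-3) g] by (rule heis_mat_mult[OF p0, symmetric])
  finally show ?thesis .
qed

end
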